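(* Let $\mathcal M=\langle M,<,+,\{x\mapsto\lambda x\}_{\lambda\in\Lambda}\rangle$ be an ordered vector space over an ordered division ring $\Lambda$, and let $E\subseteq\prod_{i\in[r]}M^{d_i}$ be a semilinear set. Then $Zar^\infty(E)$ holds: there is $\alpha\in\mathbb R_{>0}$ such that if $E$ contains no infinite grid, then $|E\cap B|\le\alpha\,\delta(B)$ for every finite grid $B$.
   Context: A semilinear set is a set definable (with parameters) in $\mathcal M$. A grid is a product $B=B_1\times\dots\times B_r$ with $B_i\subseteq M^{d_i}$; finite/infinite if each $B_i$ is. $\delta(B)=\sum_{1\le i_1<\dots<i_{r-1}\le r}\prod_{j=1}^{r-1}|B_{i_j}|$. *)

theory Defs
  imports Complex_Main
begin

definition ordered_vector_space :: "('l::{division_ring,linordered_ring_strict} \<Rightarrow> 'm::linordered_ab_group_add \<Rightarrow> 'm) \<Rightarrow> bool" where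
  "ordered_vector_space scale \<longleftrightarrow>
     (\<forall>a x y. scale a (x + y) = scale a x + scale a y) \<and>
     (\<forall>a b x. scale (a + b) x = scale a x + scale b x) \<and>
     (\<forall>a b x. scale (a * b) x = scale a (scale b x)) \<and>
     (\<forall>x. scale 1 x = x) \<and>
     (\<forall>a x y. 0 < a \<longrightarrow> x < y \<longrightarrow> scale a x < scale a y)"

datatype ('l, 'm) trm =
    Var nat
  | Const 'm            \<comment> \<open>parameter from M\<close>
  | Add "('l, 'm) trm" "('l, 'm) trm"
  | Scal 'l "('l, 'm) trm"

datatype ('l, 'm) fm =
    Less "('l, 'm) trm" "('l, 'm) trm"
  | Equal "('l, 'm) trm" "('l, 'm) trm"
  | Neg "('l, 'm) fm"
  | Conj "('l, 'm) fm" "('l, 'm) fm"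
  | Exists nat "('l, 'm) fm"

primrec trm_val :: "('l \<Rightarrow> 'm::linordered_ab_group_add \<Rightarrow> 'm) \<Rightarrow> (nat \<Rightarrow> 'm) \<Rightarrow> ('l, 'm) trm \<Rightarrow> 'm" where
  "trm_val sc env (Var i) = env i"
| "trm_val sc env (Const c) = c"
| "trm_val sc env (Add s t) = trm_val sc env s + trm_val sc env t"
| "trm_val sc env (Scal a t) = sc a (trm_val sc env t)"

primrec fm_sat :: "('l \<Rightarrow> 'm::linordered_ab_group_add \<Rightarrow> 'm) \<Rightarrow> (nat \<Rightarrow> 'm) \<Rightarrow> ('l, 'm) fm \<Rightarrow> bool" where
  "fm_sat sc env (Less s t) = (trm_val sc env s < trm_val sc env t)"
| "fm_sat sc env (Equal s t) = (trm_val sc env s = trm_val sc env t)"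
| "fm_sat sc env (Neg \<phi>) = (\<not> fm_sat sc env \<phi>)"
| "fm_sat sc env (Conj \<phi> \<psi>) = (fm_sat sc env \<phi> \<and> fm_sat sc env \<psi>)"
| "fm_sat sc env (Exists i \<phi>) = (\<exists>x. fm_sat sc (env(i := x)) \<phi>)"

text \<open>Environment associated with a tuple in M^n (variables beyond n get value 0;
  this is harmless since parameters are allowed).\<close>
definition tuple_env :: "'m::zero list \<Rightarrow> nat \<Rightarrow> 'm" where
  "tuple_env xs = (\<lambda>i. if i < length xs then xs ! i else 0)"

text \<open>Semilinear subset of M^n: definable with parameters.\<close>
definition semilinear :: "('l \<Rightarrow> 'm::linordered_ab_group_add \<Rightarrow> 'm) \<Rightarrow> nat \<Rightarrow> 'm list set \<Rightarrow> bool" where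
  "semilinear sc n S \<longleftrightarrow>
     (\<exists>\<phi>::('l, 'm) fm. S = {xs. length xs = n \<and> fm_sat sc (tuple_env xs) \<phi>})"

text \<open>A point of prod_{i<r} M^{d_i} is a list of r blocks, block i of length d i.\<close>
definition shaped :: "nat \<Rightarrow> (nat \<Rightarrow> nat) \<Rightarrow> 'm list list \<Rightarrow> bool" where
  "shaped r d xs \<longleftrightarrow> length xs = r \<and> (\<forall>i<r. length (xs ! i) = d i)"

text \<open>Semilinear subset of prod_{i<r} M^{d_i}, identified with M^{d_1+...+d_r}.\<close>
definition semilinear_prod :: "('l \<Rightarrow> 'm::linordered_ab_group_add \<Rightarrow> 'm) \<Rightarrow> nat \<Rightarrow> (nat \<Rightarrow> nat) \<Rightarrow> 'm list list set \<Rightarrow> bool" where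
  "semilinear_prod sc r d E \<longleftrightarrow>
     E \<subseteq> {xs. shaped r d xs} \<and> semilinear sc (\<Sum>i<r. d i) (concat ` E)"

definition grid :: "nat \<Rightarrow> (nat \<Rightarrow> 'm list set) \<Rightarrow> 'm list list set" where
  "grid r B = {xs. length xs = r \<and> (\<forall>i<r. xs ! i \<in> B i)}"

definition is_grid_factors :: "nat \<Rightarrow> (nat \<Rightarrow> nat) \<Rightarrow> (nat \<Rightarrow> 'm list set) \<Rightarrow> bool" where
  "is_grid_factors r d B \<longleftrightarrow> (\<forall>i<r. B i \<subseteq> {v. length v = d i})"

definition delta :: "nat \<Rightarrow> (nat \<Rightarrow> 'm list set) \<Rightarrow> real" where
  "delta r B = (\<Sum>I\<in>{I. I \<subseteq> {..<r} \<and> card I = r - 1}. \<Prod>i\<in>I. real (card (B i)))"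

end

theory Submission
  imports Defs "HOL-Library.FuncSet"
begin

text \<open>By Fourier--Motzkin elimination, a semilinear set \<open>E\<close> is a union of cells of the sign
  pattern of finitely many affine forms. If \<open>E\<close> contains no infinite grid, every point of \<open>E\<close>
  is a zero of one of these forms with a nonzero linear part \<open>a\<close>: otherwise perturbing one
  coordinate per block by small positive amounts keeps all signs and yields an infinite grid
  in \<open>E\<close>. So it suffices to count the points of \<open>E\<close> on a hyperplane \<open>a + c = 0\<close>. Sort them
  by the values \<open>w\<^sub>j\<close> of \<open>a\<close> on the blocks \<open>j\<close> where \<open>a\<close> does not vanish. Solving for one pivot
  coordinate in each such block turns a fibre into a set of the same kind with fewer
  coordinates, which is bounded by induction by \<open>\<delta>\<close> of the fibre grid. Two distinct vectors
  \<open>w\<close> have the same sum \<open>-c\<close>, so they differ in two blocks; hence the fibre grids are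
  disjoint in some factor of every \<open>(r - 1)\<close>-set of factors, and their \<open>\<delta>\<close>'s add up to at
  most \<open>\<delta>(B)\<close>. Grids with a factor of at most one element satisfy the bound with constant 1.\<close>

definition sign :: "'a::{zero,linorder} \<Rightarrow> int" where
  "sign x = (if 0 < x then 1 else if x < 0 then -1 else 0)"

lemma sign_eq_iff: "sign x = sign y \<longleftrightarrow> (0 < x \<longleftrightarrow> 0 < y) \<and> (x < 0 \<longleftrightarrow> y < 0)"
  by (auto simp: sign_def)

lemma sign_pos [simp]: "0 < x \<Longrightarrow> sign x = 1"
  and sign_neg [simp]: "x < 0 \<Longrightarrow> sign x = -1"
  by (auto simp: sign_def)

lemma zero_less_one_ordered_ring: "0 < (1::'a::{linordered_ring,ring_1})"
  using zero_le_square[of "1::'a"] zero_neq_one by (simp add: order_le_less)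

lemma inverse_positive:
  assumes "0 < (a::'a::{division_ring,linordered_ring_strict})"
  shows "0 < inverse a"
proof (rule ccontr)
  assume "\<not> 0 < inverse a"
  then have "a * inverse a \<le> 0"
    using assms by (intro mult_nonneg_nonpos) auto
  moreover have "a * inverse a = 1"
    using assms by (simp add: right_inverse)
  ultimately show False
    using zero_less_one_ordered_ring[where 'a='a] by simp
qed

locale ovs =
  fixes scale :: "'l::{division_ring,linordered_ring_strict} \<Rightarrow> 'm::linordered_ab_group_add \<Rightarrow> 'm"
  assumes ordered_vector_space: "ordered_vector_space scale"
begin

lemma scale_add_right: "scale a (x + y) = scale a x + scale a y"
  and scale_add_left: "scale (a + b) x = scale a x + scale b x"
  and scale_scale: "scale a (scale b x) = scale (a * b) x"
  and scale_one [simp]: "scale 1 x = x"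
  and scale_strict_mono: "0 < a \<Longrightarrow> x < y \<Longrightarrow> scale a x < scale a y"
  using ordered_vector_space unfolding ordered_vector_space_def by simp_all

lemma scale_zero_left [simp]: "scale 0 x = 0"
  using scale_add_left[of 0 0 x] by simp

lemma scale_zero_right [simp]: "scale a 0 = 0"
  using scale_add_right[of a 0 0] by simp

lemma scale_minus_left: "scale (- a) x = - scale a x"
  using scale_add_left[of a "- a" x] by (simp add: minus_unique)

lemma scale_minus_right: "scale a (- x) = - scale a x"
  using scale_add_right[of a x "- x"] by (simp add: minus_unique)

lemma scale_diff_left: "scale (a - b) x = scale a x - scale b x"
  using scale_add_left[of a "- b" x] by (simp add: scale_minus_left)

lemma scale_diff_right: "scale a (x - y) = scale a x - scale a y"
  using scale_add_right[of a x "- y"] by (simp add: scale_minus_right)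

lemma scale_sum_right: "scale a (\<Sum>i\<in>S. f i) = (\<Sum>i\<in>S. scale a (f i))"
  by (induction S rule: infinite_finite_induct) (auto simp: scale_add_right)

lemma scale_sum_left: "scale (\<Sum>i\<in>S. f i) x = (\<Sum>i\<in>S. scale (f i) x)"
  by (induction S rule: infinite_finite_induct) (auto simp: scale_add_left)

lemma scale_inverse_cancel [simp]:
  "a \<noteq> 0 \<Longrightarrow> scale (inverse a) (scale a x) = x"
  "a \<noteq> 0 \<Longrightarrow> scale a (scale (inverse a) x) = x"
  by (simp_all add: scale_scale)

lemma scale_pos: "0 < a \<Longrightarrow> 0 < x \<Longrightarrow> 0 < scale a x"
  using scale_strict_mono[of a 0 x] by simp

lemma scale_mono: "0 \<le> a \<Longrightarrow> x \<le> y \<Longrightarrow> scale a x \<le> scale a y"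
  by (metis order.order_iff_strict scale_strict_mono scale_zero_left)

lemma scale_left_strict_mono: "a < b \<Longrightarrow> 0 < x \<Longrightarrow> scale a x < scale b x"
  using scale_pos[of "b - a" x] by (simp add: scale_diff_left)

lemma sign_scale:
  assumes "a \<noteq> 0" and "sign x = sign y"
  shows "sign (scale a x) = sign (scale a y)"
proof (cases "0 < a")
  case True
  then have "0 < scale a z \<longleftrightarrow> 0 < z" "scale a z < 0 \<longleftrightarrow> z < 0" for z
    by (metis linorder_neqE not_less_iff_gr_or_eq scale_strict_mono scale_zero_right)+
  then show ?thesis using assms(2) by (simp add: sign_eq_iff)
next
  case False
  then have "0 < - a" using assms(1) by simp
  then have "0 < scale a z \<longleftrightarrow> z < 0" "scale a z < 0 \<longleftrightarrow> 0 < z" for z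
    by (metis linorder_neqE neg_0_less_iff_less neg_less_0_iff_less not_less_iff_gr_or_eq
        scale_minus_left scale_strict_mono scale_zero_right)+
  then show ?thesis using assms(2) by (auto simp: sign_eq_iff)
qed

lemma midpoint_between:
  assumes "x < y"
  shows "x < scale (inverse 2) (x + y)" and "scale (inverse 2) (x + y) < y"
proof -
  have "0 < (1::'l) + 1"
    using add_pos_pos zero_less_one_ordered_ring by blast
  then have two: "(2::'l) \<noteq> 0" "0 < inverse (2::'l)"
    unfolding one_add_one by (simp, rule inverse_positive)
  have double: "scale (inverse 2) (z + z) = z" for z
  proof -
    have "scale 2 z = z + z"
      using scale_add_left[of 1 1 z] by simp
    then show ?thesis
      using two(1) by (metis scale_inverse_cancel(1))
  qed
  have "scale (inverse 2) (x + x) < scale (inverse 2) (x + y)"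
    by (rule scale_strict_mono[OF two(2)]) (simp add: assms)
  then show "x < scale (inverse 2) (x + y)"
    by (simp only: double)
  have "scale (inverse 2) (x + y) < scale (inverse 2) (y + y)"
    by (rule scale_strict_mono[OF two(2)]) (simp add: assms)
  then show "scale (inverse 2) (x + y) < y"
    by (simp only: double)
qed

end

section \<open>Quantifier elimination\<close>

primrec trm_vars_below :: "nat \<Rightarrow> ('l, 'm) trm \<Rightarrow> bool" where
  "trm_vars_below N (Var i) \<longleftrightarrow> i < N"
| "trm_vars_below N (Const c) \<longleftrightarrow> True"
| "trm_vars_below N (Add s t) \<longleftrightarrow> trm_vars_below N s \<and> trm_vars_below N t"
| "trm_vars_below N (Scal a t) \<longleftrightarrow> trm_vars_below N t"

primrec fm_vars_below :: "nat \<Rightarrow> ('l, 'm) fm \<Rightarrow> bool" where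
  "fm_vars_below N (Less s t) \<longleftrightarrow> trm_vars_below N s \<and> trm_vars_below N t"
| "fm_vars_below N (Equal s t) \<longleftrightarrow> trm_vars_below N s \<and> trm_vars_below N t"
| "fm_vars_below N (Neg \<phi>) \<longleftrightarrow> fm_vars_below N \<phi>"
| "fm_vars_below N (Conj \<phi> \<psi>) \<longleftrightarrow> fm_vars_below N \<phi> \<and> fm_vars_below N \<psi>"
| "fm_vars_below N (Exists i \<phi>) \<longleftrightarrow> i < N \<and> fm_vars_below N \<phi>"

lemma eventually_trm_vars_below: "\<forall>\<^sub>F N in sequentially. trm_vars_below N t"
  by (induction t) (auto intro: eventually_conj eventually_gt_at_top)

lemma eventually_fm_vars_below: "\<forall>\<^sub>F N in sequentially. fm_vars_below N \<phi>"
  by (induction \<phi>) (auto intro: eventually_conj eventually_gt_at_top eventually_trm_vars_below)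

context ovs
begin

definition aff_val :: "nat \<Rightarrow> (nat \<Rightarrow> 'l) \<times> 'm \<Rightarrow> (nat \<Rightarrow> 'm) \<Rightarrow> 'm" where
  "aff_val N f env = (\<Sum>v<N. scale (fst f v) (env v)) + snd f"

definition aff_diff :: "(nat \<Rightarrow> 'l) \<times> 'm \<Rightarrow> (nat \<Rightarrow> 'l) \<times> 'm \<Rightarrow> (nat \<Rightarrow> 'l) \<times> 'm" where
  "aff_diff f g = (\<lambda>v. fst f v - fst g v, snd f - snd g)"

definition aff_scale :: "'l \<Rightarrow> (nat \<Rightarrow> 'l) \<times> 'm \<Rightarrow> (nat \<Rightarrow> 'l) \<times> 'm" where
  "aff_scale a f = (\<lambda>v. a * fst f v, scale a (snd f))"

primrec trm_aff :: "('l, 'm) trm \<Rightarrow> (nat \<Rightarrow> 'l) \<times> 'm" where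
  "trm_aff (Var i) = ((\<lambda>v. if v = i then 1 else 0), 0)"
| "trm_aff (Const c) = ((\<lambda>v. 0), c)"
| "trm_aff (Add s t) = ((\<lambda>v. fst (trm_aff s) v + fst (trm_aff t) v), snd (trm_aff s) + snd (trm_aff t))"
| "trm_aff (Scal a t) = aff_scale a (trm_aff t)"

lemma aff_val_diff: "aff_val N (aff_diff f g) env = aff_val N f env - aff_val N g env"
  by (simp add: aff_val_def aff_diff_def scale_diff_left sum_subtractf algebra_simps)

lemma aff_val_scale: "aff_val N (aff_scale a f) env = scale a (aff_val N f env)"
  by (simp add: aff_val_def aff_scale_def scale_scale scale_sum_right scale_add_right)

lemma aff_val_trm_aff: "trm_vars_below N t \<Longrightarrow> aff_val N (trm_aff t) env = trm_val scale env t"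
proof (induction t)
  case (Var i)
  have "(\<Sum>v<N. scale (if v = i then 1 else 0) (env v)) = (\<Sum>v<N. if v = i then env i else 0)"
    by (rule sum.cong) auto
  then show ?case
    using Var by (simp add: aff_val_def)
next
  case (Add s t)
  have "aff_val N (trm_aff (Add s t)) env = aff_val N (trm_aff s) env + aff_val N (trm_aff t) env"
    by (simp add: aff_val_def scale_add_left sum.distrib algebra_simps)
  then show ?case
    using Add by simp
next
  case (Scal a t)
  then show ?case
    by (simp add: aff_val_scale)
qed (simp add: aff_val_def)

lemma aff_val_upd:
  assumes "i < N"
  shows "aff_val N f (env(i := x)) = aff_val N f env + scale (fst f i) (x - env i)"
proof -
  have "(\<Sum>v<N. scale (fst f v) ((env(i := x)) v))
      = (\<Sum>v<N. scale (fst f v) (env v) + (if v = i then scale (fst f i) (x - env i) else 0))"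
    by (rule sum.cong) (auto simp: scale_diff_right)
  then show ?thesis
    using assms by (simp add: aff_val_def sum.distrib algebra_simps)
qed

lemma aff_val_drop_var:
  assumes "i < N"
  shows "aff_val N ((fst f)(i := 0), snd f) env = aff_val N f env - scale (fst f i) (env i)"
proof -
  have "(\<Sum>v<N. scale (fst f v) (env v))
      = (\<Sum>v<N. scale (((fst f)(i := 0)) v) (env v) + (if v = i then scale (fst f i) (env i) else 0))"
    by (rule sum.cong) auto
  then show ?thesis
    using assms by (simp add: aff_val_def sum.distrib algebra_simps)
qed

definition solve_for :: "nat \<Rightarrow> (nat \<Rightarrow> 'l) \<times> 'm \<Rightarrow> (nat \<Rightarrow> 'l) \<times> 'm" where
  "solve_for i f = aff_scale (- inverse (fst f i)) ((fst f)(i := 0), snd f)"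

lemma aff_val_solve_for:
  assumes "i < N" and "fst f i \<noteq> 0"
  shows "aff_val N f env = scale (fst f i) (env i - aff_val N (solve_for i f) env)"
proof -
  have "aff_val N (solve_for i f) env = env i - scale (inverse (fst f i)) (aff_val N f env)"
    unfolding solve_for_def aff_val_scale aff_val_drop_var[OF assms(1)] scale_minus_left
    using assms(2) by (simp add: scale_diff_right)
  then show ?thesis
    using assms(2) by (simp add: scale_diff_right)
qed

lemma aff_val_solve_for_upd:
  "i < N \<Longrightarrow> aff_val N (solve_for i f) (env(i := x)) = aff_val N (solve_for i f) env"
  by (simp add: aff_val_upd solve_for_def aff_scale_def)

definition sign_determined :: "nat \<Rightarrow> ((nat \<Rightarrow> 'l) \<times> 'm) set \<Rightarrow> ('l, 'm) fm \<Rightarrow> bool" where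
  "sign_determined N F \<phi> \<longleftrightarrow>
     (\<forall>env env'. (\<forall>f\<in>F. sign (aff_val N f env) = sign (aff_val N f env')) \<longrightarrow>
        (fm_sat scale env \<phi> \<longleftrightarrow> fm_sat scale env' \<phi>))"

text \<open>Fourier--Motzkin: the sign conditions that survive eliminating \<open>x\<^sub>i\<close> are those of the forms
  without \<open>x\<^sub>i\<close> and of the differences of the bounds \<open>solve_for i f\<close> on \<open>x\<^sub>i\<close>.\<close>

definition eliminate :: "nat \<Rightarrow> ((nat \<Rightarrow> 'l) \<times> 'm) set \<Rightarrow> ((nat \<Rightarrow> 'l) \<times> 'm) set" where
  "eliminate i F = {f \<in> F. fst f i = 0} \<union>
     (\<lambda>(f, g). aff_diff (solve_for i f) (solve_for i g)) ` {(f, g) \<in> F \<times> F. fst f i \<noteq> 0 \<and> fst g i \<noteq> 0}"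

lemma finite_eliminate: "finite F \<Longrightarrow> finite (eliminate i F)"
  unfolding eliminate_def by (auto intro: finite_subset[of _ "F \<times> F"])

lemma exists_between:
  fixes P Q :: "'m set" and e :: 'm
  assumes "finite P" "finite Q" "\<forall>p\<in>P. \<forall>q\<in>Q. p < q" and "0 < e"
  shows "\<exists>y. (\<forall>p\<in>P. p < y) \<and> (\<forall>q\<in>Q. y < q)"
proof (cases "P = {}"; cases "Q = {}")
  assume "P = {}" "Q \<noteq> {}"
  have "\<forall>q\<in>Q. Min Q - e < q"
    using assms(2,4) by (meson Min_le diff_less_eq less_add_same_cancel1 order_less_le_trans)
  then show ?thesis
    using \<open>P = {}\<close> by blast
next
  assume "P \<noteq> {}" "Q = {}"
  have "\<forall>p\<in>P. p < Max P + e"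
    using assms(1,4) by (meson Max_ge less_add_same_cancel1 order_le_less_trans)
  then show ?thesis
    using \<open>Q = {}\<close> by blast
next
  assume "P \<noteq> {}" "Q \<noteq> {}"
  then have "Max P < Min Q"
    using assms by (simp add: Max_less_iff Min_gr_iff)
  then show ?thesis
    using midpoint_between[of "Max P" "Min Q"] assms(1,2)
    by (meson Max_ge Min_le order_le_less_trans order_less_le_trans)
qed simp

lemma sign_diff_eq_if_same_side:
  fixes x y u v :: 'm
  assumes "u \<noteq> x" "u < x \<Longrightarrow> v < y" "x < u \<Longrightarrow> y < v"
  shows "sign (x - u) = sign (y - v)"
  using assms by (cases "u < x") (simp_all add: not_less_iff_gr_or_eq)

lemma exists_same_position:
  fixes \<beta> \<beta>' :: "'a \<Rightarrow> 'm" and x :: 'm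
  assumes "finite K" and same: "\<forall>f\<in>K. \<forall>g\<in>K. sign (\<beta> f - \<beta> g) = sign (\<beta>' f - \<beta>' g)"
  shows "\<exists>y. \<forall>f\<in>K. sign (x - \<beta> f) = sign (y - \<beta>' f)"
proof (cases "\<exists>g\<in>K. x = \<beta> g")
  case True
  then show ?thesis
    using same by blast
next
  case False
  define Lo where "Lo = {f \<in> K. \<beta> f < x}"
  define Hi where "Hi = {f \<in> K. x < \<beta> f}"
  have "\<beta>' f < \<beta>' g" if "f \<in> Lo" "g \<in> Hi" for f g
  proof -
    have "f \<in> K" "g \<in> K" "\<beta> f < \<beta> g"
      using that by (auto simp: Lo_def Hi_def)
    then have "sign (\<beta>' f - \<beta>' g) = -1"
      using same[rule_format, of f g] by simp
    then show ?thesis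
      by (simp add: sign_def split: if_splits)
  qed
  then have ordered: "\<forall>p\<in>\<beta>' ` Lo. \<forall>q\<in>\<beta>' ` Hi. p < q"
    by blast
  show ?thesis
  proof (cases "K = {}")
    case False
    then obtain f where "f \<in> K" "x \<noteq> \<beta> f"
      using \<open>\<not> (\<exists>g\<in>K. x = \<beta> g)\<close> by blast
    then have "0 < x - \<beta> f \<or> 0 < \<beta> f - x"
      by (cases "x < \<beta> f") auto
    then obtain e :: 'm where "0 < e" by blast
    have "finite (\<beta>' ` Lo)" "finite (\<beta>' ` Hi)"
      using assms(1) by (simp_all add: Lo_def Hi_def)
    then obtain y where "\<forall>p\<in>\<beta>' ` Lo. p < y" "\<forall>q\<in>\<beta>' ` Hi. y < q"
      using exists_between[OF _ _ ordered \<open>0 < e\<close>] by blast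
    then have "sign (x - \<beta> f) = sign (y - \<beta>' f)" if "f \<in> K" for f
      using that \<open>\<not> (\<exists>g\<in>K. x = \<beta> g)\<close>
      by (intro sign_diff_eq_if_same_side) (auto simp: Lo_def Hi_def)
    then show ?thesis
      by blast
  qed simp
qed

lemma sign_aff_val_upd:
  assumes i: "i < N"
    and zero: "fst f i = 0 \<Longrightarrow> sign (aff_val N f env) = sign (aff_val N f env')"
    and nonzero: "fst f i \<noteq> 0 \<Longrightarrow>
      sign (x - aff_val N (solve_for i f) env) = sign (y - aff_val N (solve_for i f) env')"
  shows "sign (aff_val N f (env(i := x))) = sign (aff_val N f (env'(i := y)))"
proof (cases "fst f i = 0")
  case True
  then show ?thesis
    using zero by (simp add: aff_val_upd[OF i])
next
  case False
  then have "sign (scale (fst f i) (x - aff_val N (solve_for i f) env))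
           = sign (scale (fst f i) (y - aff_val N (solve_for i f) env'))"
    by (intro sign_scale nonzero)
  then show ?thesis
    using aff_val_solve_for[OF i False] by (simp add: aff_val_solve_for_upd[OF i])
qed

lemma sign_determined_Exists_step:
  assumes i: "i < N" and "finite F" and det: "sign_determined N F \<phi>"
    and signs: "\<forall>f\<in>eliminate i F. sign (aff_val N f env) = sign (aff_val N f env')"
    and sat: "fm_sat scale (env(i := x)) \<phi>"
  shows "\<exists>y. fm_sat scale (env'(i := y)) \<phi>"
proof -
  define K where "K = {f \<in> F. fst f i \<noteq> 0}"
  define \<beta> where "\<beta> f = aff_val N (solve_for i f) env" for f
  define \<beta>' where "\<beta>' f = aff_val N (solve_for i f) env'" for f
  have "sign (\<beta> f - \<beta> g) = sign (\<beta>' f - \<beta>' g)" if "f \<in> K" "g \<in> K" for f g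
  proof -
    have "aff_diff (solve_for i f) (solve_for i g) \<in> eliminate i F"
      unfolding eliminate_def using that by (intro UnI2 image_eqI[where x="(f, g)"]) (auto simp: K_def)
    then have "sign (aff_val N (aff_diff (solve_for i f) (solve_for i g)) env)
             = sign (aff_val N (aff_diff (solve_for i f) (solve_for i g)) env')"
      by (rule bspec[OF signs])
    then show ?thesis
      by (simp only: \<beta>_def \<beta>'_def aff_val_diff)
  qed
  moreover have "finite K"
    using \<open>finite F\<close> by (simp add: K_def)
  ultimately obtain y where y: "\<forall>f\<in>K. sign (x - \<beta> f) = sign (y - \<beta>' f)"
    using exists_same_position[of K \<beta> \<beta>' x] by blast
  have "sign (aff_val N f (env(i := x))) = sign (aff_val N f (env'(i := y)))" if "f \<in> F" for f
  proof (rule sign_aff_val_upd[OF i])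
    assume "fst f i = 0"
    then have "f \<in> eliminate i F"
      using that by (simp add: eliminate_def)
    then show "sign (aff_val N f env) = sign (aff_val N f env')"
      by (rule bspec[OF signs])
  next
    assume "fst f i \<noteq> 0"
    then have "f \<in> K"
      using that by (simp add: K_def)
    then show "sign (x - aff_val N (solve_for i f) env) = sign (y - aff_val N (solve_for i f) env')"
      using y by (simp add: \<beta>_def \<beta>'_def)
  qed
  then have "fm_sat scale (env(i := x)) \<phi> \<longleftrightarrow> fm_sat scale (env'(i := y)) \<phi>"
    using det unfolding sign_determined_def by blast
  then show ?thesis
    using sat by blast
qed

lemma sign_determined_Exists:
  assumes "i < N" "finite F" "sign_determined N F \<phi>"
  shows "sign_determined N (eliminate i F) (Exists i \<phi>)"
  unfolding sign_determined_def fm_sat.simps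
proof (intro allI impI)
  fix env env'
  assume "\<forall>f\<in>eliminate i F. sign (aff_val N f env) = sign (aff_val N f env')"
  then show "(\<exists>x. fm_sat scale (env(i := x)) \<phi>) \<longleftrightarrow> (\<exists>y. fm_sat scale (env'(i := y)) \<phi>)"
    using sign_determined_Exists_step[OF assms] by (metis (no_types, lifting))
qed

theorem quantifier_elimination:
  "fm_vars_below N \<phi> \<Longrightarrow> \<exists>F. finite F \<and> sign_determined N F \<phi>"
proof (induction \<phi>)
  case (Less s t)
  then have "sign_determined N {aff_diff (trm_aff t) (trm_aff s)} (Less s t)"
    by (simp add: sign_determined_def aff_val_diff aff_val_trm_aff sign_eq_iff)
  then show ?case by blast
next
  case (Equal s t)
  then have "sign_determined N {aff_diff (trm_aff t) (trm_aff s)} (Equal s t)"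
    by (auto simp: sign_determined_def aff_val_diff aff_val_trm_aff sign_eq_iff)
  then show ?case by blast
next
  case (Neg \<phi>)
  then show ?case
    by (auto simp: sign_determined_def)
next
  case (Conj \<phi> \<psi>)
  then obtain F G where "finite F" "sign_determined N F \<phi>" "finite G" "sign_determined N G \<psi>"
    by auto
  then have "finite (F \<union> G) \<and> sign_determined N (F \<union> G) (Conj \<phi> \<psi>)"
    unfolding sign_determined_def fm_sat.simps by (metis UnCI finite_UnI)
  then show ?case by blast
next
  case (Exists i \<phi>)
  then obtain F where "finite F" "sign_determined N F \<phi>" and "i < N"
    by auto
  then show ?case
    using sign_determined_Exists finite_eliminate by (intro exI[of _ "eliminate i F"]) simp
qed

end

section \<open>The grid measure \<open>\<delta>\<close>\<close>

text \<open>The \<open>\<delta>\<close> of \<open>Defs\<close>, for grid factors of arbitrary type.\<close>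

definition grid_delta :: "nat \<Rightarrow> (nat \<Rightarrow> 'a set) \<Rightarrow> real" where
  "grid_delta r B = (\<Sum>I\<in>{I. I \<subseteq> {..<r} \<and> card I = r - 1}. \<Prod>i\<in>I. real (card (B i)))"

lemma finite_subsets_card: "finite {I. I \<subseteq> {..<r::nat} \<and> card I = k}"
  by (rule finite_subset[of _ "Pow {..<r}"]) auto

lemma grid_delta_nonneg: "0 \<le> grid_delta r B"
  unfolding grid_delta_def by (intro sum_nonneg prod_nonneg) auto

lemma grid_delta_mono:
  assumes "\<forall>i<r. card (B' i) \<le> card (B i)"
  shows "grid_delta r B' \<le> grid_delta r B"
  unfolding grid_delta_def using assms by (intro sum_mono prod_mono) auto

lemma grid_delta_cong:
  assumes "\<forall>i<r. card (B' i) = card (B i)"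
  shows "grid_delta r B' = grid_delta r B"
  using assms grid_delta_mono[of r B' B] grid_delta_mono[of r B B'] by simp

lemma card_PiE_le_grid_delta:
  assumes fin: "\<forall>i<r. finite (B i)" and small: "r = 0 \<or> (\<exists>j<r. card (B j) \<le> 1)"
  shows "real (card (PiE {..<r} B)) \<le> grid_delta r B"
  using small
proof
  assume "r = 0"
  then have "{I. I \<subseteq> {..<r} \<and> card I = r - 1} = {{}}" by auto
  then show ?thesis
    using \<open>r = 0\<close> by (simp add: grid_delta_def)
next
  assume "\<exists>j<r. card (B j) \<le> 1"
  then obtain j where j: "j < r" "card (B j) \<le> 1" by blast
  have "real (card (PiE {..<r} B)) = real (card (B j)) * (\<Prod>i\<in>{..<r} - {j}. real (card (B i)))"
    using j by (simp add: card_PiE prod.remove)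
  also have "\<dots> \<le> (\<Prod>i\<in>{..<r} - {j}. real (card (B i)))"
    using j by (intro mult_left_le_one_le prod_nonneg) auto
  also have "\<dots> \<le> grid_delta r B"
    unfolding grid_delta_def using j
    by (intro member_le_sum[OF _ _ finite_subsets_card]) (auto intro!: prod_nonneg)
  finally show ?thesis .
qed

text \<open>For each \<open>(r - 1)\<close>-set \<open>I\<close> of factors, the products over \<open>I\<close> of the subgrids are disjoint
  subsets of the product over \<open>I\<close> of the whole grid.\<close>

lemma sum_grid_delta_le:
  assumes "finite W" and sub: "\<forall>w\<in>W. \<forall>i<r. B' w i \<subseteq> B i" and fin: "\<forall>i<r. finite (B i)"
    and disj: "\<forall>w\<in>W. \<forall>w'\<in>W. w \<noteq> w' \<longrightarrow>
                 (\<forall>I. I \<subseteq> {..<r} \<and> card I = r - 1 \<longrightarrow> (\<exists>i\<in>I. B' w i \<inter> B' w' i = {}))"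
  shows "(\<Sum>w\<in>W. grid_delta r (B' w)) \<le> grid_delta r B"
proof -
  have "(\<Sum>w\<in>W. \<Prod>i\<in>I. real (card (B' w i))) \<le> (\<Prod>i\<in>I. real (card (B i)))"
    if I: "I \<subseteq> {..<r}" "card I = r - 1" for I
  proof -
    have finI: "finite I"
      using I(1) finite_subset by blast
    have finP: "finite (PiE I (B' w))" if "w \<in> W" for w
      using that I sub fin by (intro finite_PiE finI) (meson finite_subset lessThan_iff subsetD)
    have "(\<Sum>w\<in>W. \<Prod>i\<in>I. real (card (B' w i))) = real (\<Sum>w\<in>W. card (PiE I (B' w)))"
      using finI by (simp add: card_PiE)
    also have "(\<Sum>w\<in>W. card (PiE I (B' w))) = card (\<Union>w\<in>W. PiE I (B' w))"
    proof (rule card_UN_disjoint[symmetric])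
      show "\<forall>w\<in>W. \<forall>w'\<in>W. w \<noteq> w' \<longrightarrow> PiE I (B' w) \<inter> PiE I (B' w') = {}"
      proof (intro ballI impI)
        fix w w' assume "w \<in> W" "w' \<in> W" "w \<noteq> w'"
        then obtain i where "i \<in> I" "B' w i \<inter> B' w' i = {}"
          using disj I by blast
        then show "PiE I (B' w) \<inter> PiE I (B' w') = {}"
          by (auto simp: PiE_def Pi_def)
      qed
    qed (use \<open>finite W\<close> finP in auto)
    also have "card (\<Union>w\<in>W. PiE I (B' w)) \<le> card (PiE I B)"
    proof (rule card_mono)
      show "finite (PiE I B)"
        using finI fin I by (intro finite_PiE) auto
      show "(\<Union>w\<in>W. PiE I (B' w)) \<subseteq> PiE I B"
        using sub I by (auto simp: PiE_def Pi_def) (meson lessThan_iff subset_iff)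
    qed
    finally show ?thesis
      using finI by (simp add: card_PiE)
  qed
  then have "(\<Sum>I\<in>{I. I \<subseteq> {..<r} \<and> card I = r - 1}. \<Sum>w\<in>W. \<Prod>i\<in>I. real (card (B' w i)))
             \<le> grid_delta r B"
    unfolding grid_delta_def by (intro sum_mono) auto
  then show ?thesis
    unfolding grid_delta_def by (subst sum.swap)
qed

text \<open>Such vectors differ in at least two indices of \<open>J\<close>, and an \<open>(r - 1)\<close>-subset of \<open>{..<r}\<close>
  misses only one index.\<close>

lemma equal_sums_differ_in_subset:
  fixes w w' :: "nat \<Rightarrow> 'a::ab_group_add"
  assumes "finite J" and J: "J \<subseteq> {..<r}" and sums: "(\<Sum>j\<in>J. w j) = (\<Sum>j\<in>J. w' j)"
    and out: "\<forall>j. j \<notin> J \<longrightarrow> w j = w' j" and "w \<noteq> w'"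
    and I: "I \<subseteq> {..<r}" "card I = r - 1"
  shows "\<exists>i\<in>I. i \<in> J \<and> w i \<noteq> w' i"
proof -
  obtain j0 where j0: "j0 \<in> J" "w j0 \<noteq> w' j0"
    using out \<open>w \<noteq> w'\<close> by (metis ext)
  show ?thesis
  proof (cases "j0 \<in> I")
    case False
    have "card ({..<r} - {j0}) = r - 1"
      using j0 J by auto
    then have I_eq: "I = {..<r} - {j0}"
      using False I by (intro card_subset_eq) auto
    have "\<exists>j\<in>J - {j0}. w j \<noteq> w' j"
    proof (rule ccontr)
      assume "\<not> ?thesis"
      then have "(\<Sum>j\<in>J - {j0}. w j) = (\<Sum>j\<in>J - {j0}. w' j)"
        by (intro sum.cong) auto
      then have "w j0 = w' j0"
        using sums \<open>finite J\<close> j0(1) by (simp add: sum.remove)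
      then show False
        using j0(2) by simp
    qed
    then show ?thesis
      using I_eq J by blast
  qed (use j0 in blast)
qed

lemma sign_add_small:
  fixes x d \<delta> :: "'a::linordered_ab_group_add"
  assumes "- \<delta> \<le> d" "d \<le> \<delta>" "\<delta> < max x (- x)"
  shows "sign (x + d) = sign x"
proof (cases "0 < x")
  case True
  then have "0 < x - \<delta>"
    using assms(3) by (auto simp: max_def split: if_splits)
  also have "x - \<delta> \<le> x + d"
    using assms(1) by simp
  finally show ?thesis
    using True by simp
next
  case False
  have "x \<noteq> 0"
  proof
    assume "x = 0"
    then have "\<delta> < 0"
      using assms(3) by simp
    moreover have "- \<delta> \<le> \<delta>"
      using assms(1,2) by (rule order_trans)
    ultimately show False
      by (meson less_le_trans neg_0_less_iff_less order_less_asym)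
  qed
  then have "x < 0"
    using False by simp
  have "x + d \<le> x + \<delta>"
    using assms(2) by simp
  also have "x + \<delta> < x + - x"
    using assms(3) \<open>x < 0\<close> by (intro add_strict_left_mono) (simp add: max_def split: if_splits)
  finally show ?thesis
    using \<open>x < 0\<close> by simp
qed

lemma mult_inverse_add_one_less_one:
  assumes "0 \<le> (S::'a::{division_ring,linordered_ring_strict})"
  shows "S * inverse (S + 1) < 1"
proof -
  have pos: "0 < S + 1"
    by (rule add_nonneg_pos[OF assms zero_less_one_ordered_ring])
  then have "(S + 1) * inverse (S + 1) = 1"
    by (simp add: right_inverse)
  then have "S * inverse (S + 1) + inverse (S + 1) = 1"
    by (simp add: distrib_right)
  moreover have "0 < inverse (S + 1)"
    using pos by (rule inverse_positive)
  ultimately show ?thesis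
    by (metis less_add_same_cancel1)
qed

text \<open>Points of \<open>M\<^bsup>T 0\<^esup> \<times> \<dots> \<times> M\<^bsup>T (r - 1)\<^esup>\<close>: block \<open>i\<close> is indexed by a finite set \<open>T i\<close> of
  coordinates, so that coordinates can be deleted without renumbering.\<close>

definition points :: "nat \<Rightarrow> (nat \<Rightarrow> nat set) \<Rightarrow> (nat \<Rightarrow> nat \<Rightarrow> 'a) set" where
  "points r T = PiE {..<r} (\<lambda>i. PiE (T i) (\<lambda>_. UNIV))"

definition contains_infinite_grid :: "nat \<Rightarrow> (nat \<Rightarrow> nat set) \<Rightarrow> (nat \<Rightarrow> nat \<Rightarrow> 'a) set \<Rightarrow> bool" where
  "contains_infinite_grid r T E \<longleftrightarrow>
     (\<exists>G. (\<forall>i<r. G i \<subseteq> PiE (T i) (\<lambda>_. UNIV) \<and> infinite (G i)) \<and> PiE {..<r} G \<subseteq> E)"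

definition finite_grid_factors :: "nat \<Rightarrow> (nat \<Rightarrow> nat set) \<Rightarrow> (nat \<Rightarrow> (nat \<Rightarrow> 'a) set) \<Rightarrow> bool" where
  "finite_grid_factors r T B \<longleftrightarrow> (\<forall>i<r. B i \<subseteq> PiE (T i) (\<lambda>_. UNIV) \<and> finite (B i))"

definition nonconstant :: "nat \<Rightarrow> (nat \<Rightarrow> nat set) \<Rightarrow> (nat \<Rightarrow> nat \<Rightarrow> 'a::zero) \<Rightarrow> bool" where
  "nonconstant r T a \<longleftrightarrow> (\<exists>j<r. \<exists>t\<in>T j. a j t \<noteq> 0)"

lemma points_iff:
  "p \<in> points r T \<longleftrightarrow> (\<forall>i<r. \<forall>t. t \<notin> T i \<longrightarrow> p i t = undefined) \<and> (\<forall>i\<ge>r. p i = undefined)"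
  unfolding points_def PiE_iff extensional_def by auto

context ovs
begin

definition block_val :: "(nat \<Rightarrow> nat set) \<Rightarrow> (nat \<Rightarrow> nat \<Rightarrow> 'l) \<Rightarrow> nat \<Rightarrow> (nat \<Rightarrow> 'm) \<Rightarrow> 'm" where
  "block_val T a j z = (\<Sum>t\<in>T j. scale (a j t) (z t))"

definition point_val :: "nat \<Rightarrow> (nat \<Rightarrow> nat set) \<Rightarrow> (nat \<Rightarrow> nat \<Rightarrow> 'l) \<times> 'm \<Rightarrow> (nat \<Rightarrow> nat \<Rightarrow> 'm) \<Rightarrow> 'm" where
  "point_val r T f p = (\<Sum>i<r. block_val T (fst f) i (p i)) + snd f"

definition sign_invariant ::
    "nat \<Rightarrow> (nat \<Rightarrow> nat set) \<Rightarrow> ((nat \<Rightarrow> nat \<Rightarrow> 'l) \<times> 'm) set \<Rightarrow> (nat \<Rightarrow> nat \<Rightarrow> 'm) set \<Rightarrow> bool" where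
  "sign_invariant r T F E \<longleftrightarrow>
     (\<forall>p\<in>points r T. \<forall>q\<in>points r T.
        (\<forall>f\<in>F. sign (point_val r T f p) = sign (point_val r T f q)) \<longrightarrow> (p \<in> E \<longleftrightarrow> q \<in> E))"

lemma point_val_constant: "\<not> nonconstant r T (fst f) \<Longrightarrow> point_val r T f p = snd f"
  by (simp add: nonconstant_def point_val_def block_val_def)

lemma block_val_upd:
  assumes "finite (T j)" "t \<in> T j"
  shows "block_val T a j (z(t := z t + h)) = block_val T a j z + scale (a j t) h"
proof -
  have "(\<Sum>s\<in>T j. scale (a j s) ((z(t := z t + h)) s))
      = (\<Sum>s\<in>T j. scale (a j s) (z s) + (if s = t then scale (a j t) h else 0))"
    by (rule sum.cong) (auto simp: scale_add_right)
  then show ?thesis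
    using assms by (simp add: block_val_def sum.distrib)
qed

lemma scale_between_abs:
  assumes "0 \<le> h" "h \<le> \<epsilon>"
  shows "- scale \<bar>a\<bar> \<epsilon> \<le> scale a h" and "scale a h \<le> scale \<bar>a\<bar> \<epsilon>"
proof -
  have X: "0 \<le> scale \<bar>a\<bar> \<epsilon>"
    using scale_mono[of "\<bar>a\<bar>" 0 \<epsilon>] assms by simp
  have Y: "0 \<le> scale \<bar>a\<bar> h"
    using scale_mono[of "\<bar>a\<bar>" 0 h] assms by simp
  have YX: "scale \<bar>a\<bar> h \<le> scale \<bar>a\<bar> \<epsilon>"
    using assms by (intro scale_mono) auto
  have "- scale \<bar>a\<bar> \<epsilon> \<le> 0" "- scale \<bar>a\<bar> h \<le> 0"
    using X Y by simp_all
  then have "- scale \<bar>a\<bar> \<epsilon> \<le> scale \<bar>a\<bar> h" "- scale \<bar>a\<bar> h \<le> scale \<bar>a\<bar> \<epsilon>"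
    using order_trans[OF _ Y] order_trans[OF _ X] by blast+
  moreover have "scale a h = scale \<bar>a\<bar> h \<or> scale a h = - scale \<bar>a\<bar> h"
    by (cases "0 \<le> a") (simp_all add: scale_minus_left)
  ultimately show "- scale \<bar>a\<bar> \<epsilon> \<le> scale a h" and "scale a h \<le> scale \<bar>a\<bar> \<epsilon>"
    using YX by auto
qed

text \<open>The radius \<open>|x| / (\<Sum>i<r. |c i| + 1)\<close> works.\<close>

lemma sign_stable_radius:
  fixes x :: 'm and c :: "nat \<Rightarrow> 'l"
  assumes "x \<noteq> 0"
  shows "\<exists>\<epsilon>>0. \<forall>h. (\<forall>i<r. 0 \<le> h i \<and> h i \<le> \<epsilon>) \<longrightarrow>
           sign (x + (\<Sum>i<r. scale (c i) (h i))) = sign x"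
proof -
  define S where "S = (\<Sum>i<r. \<bar>c i\<bar>)"
  define g where "g = max x (- x)"
  define \<epsilon> where "\<epsilon> = scale (inverse (S + 1)) g"
  have S: "0 \<le> S"
    by (simp add: S_def sum_nonneg)
  have "0 < g"
    using assms by (cases "0 < x") (auto simp: g_def max_def)
  moreover have "0 < inverse (S + 1)"
    using S zero_less_one_ordered_ring by (intro inverse_positive add_nonneg_pos)
  ultimately have "0 < \<epsilon>"
    by (simp add: \<epsilon>_def scale_pos)
  have "scale S \<epsilon> = scale (S * inverse (S + 1)) g"
    by (simp add: \<epsilon>_def scale_scale)
  also have "\<dots> < scale 1 g"
    using mult_inverse_add_one_less_one[OF S] \<open>0 < g\<close> by (rule scale_left_strict_mono)
  finally have small: "scale S \<epsilon> < max x (- x)"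
    by (simp add: g_def)
  have "sign (x + (\<Sum>i<r. scale (c i) (h i))) = sign x" if h: "\<forall>i<r. 0 \<le> h i \<and> h i \<le> \<epsilon>" for h
  proof (rule sign_add_small[OF _ _ small])
    have "- scale S \<epsilon> = (\<Sum>i<r. - scale \<bar>c i\<bar> \<epsilon>)"
      by (simp add: S_def scale_sum_left sum_negf)
    also have "\<dots> \<le> (\<Sum>i<r. scale (c i) (h i))"
      using h scale_between_abs(1) by (intro sum_mono) auto
    finally show "- scale S \<epsilon> \<le> (\<Sum>i<r. scale (c i) (h i))" .
    have "(\<Sum>i<r. scale (c i) (h i)) \<le> (\<Sum>i<r. scale \<bar>c i\<bar> \<epsilon>)"
      using h scale_between_abs(2) by (intro sum_mono) auto
    also have "\<dots> = scale S \<epsilon>"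
      by (simp add: S_def scale_sum_left)
    finally show "(\<Sum>i<r. scale (c i) (h i)) \<le> scale S \<epsilon>" .
  qed
  then show ?thesis
    using \<open>0 < \<epsilon>\<close> by blast
qed

lemma infinite_interval:
  assumes "0 < (\<epsilon>::'m)"
  shows "infinite {h. 0 < h \<and> h < \<epsilon>}"
proof
  assume fin: "finite {h. 0 < h \<and> h < \<epsilon>}"
  have half: "0 < scale (inverse 2) h \<and> scale (inverse 2) h < h" if "0 < h" for h
    using midpoint_between[OF that] by simp
  then have "{h. 0 < h \<and> h < \<epsilon>} \<noteq> {}"
    using assms by blast
  then have min: "Min {h. 0 < h \<and> h < \<epsilon>} \<in> {h. 0 < h \<and> h < \<epsilon>}"
    by (rule Min_in[OF fin])
  then have "scale (inverse 2) (Min {h. 0 < h \<and> h < \<epsilon>}) \<in> {h. 0 < h \<and> h < \<epsilon>}"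
    using half by fastforce
  then show False
    using Min_le[OF fin] half min by fastforce
qed

lemma infinite_perturbations:
  assumes "0 < (\<epsilon>::'m)"
  shows "infinite ((\<lambda>h. z(s := z s + h)) ` {h. 0 < h \<and> h < \<epsilon>})"
proof -
  have "inj (\<lambda>h. z(s := z s + h))"
    by (rule injI) (metis add_left_cancel fun_upd_same)
  then show ?thesis
    using infinite_interval[OF assms] by (metis finite_imageD inj_on_subset subset_UNIV)
qed

lemma point_val_perturb:
  assumes "\<forall>i<r. finite (T i)" "\<forall>i<r. t i \<in> T i" and q: "\<forall>i<r. q i = (p i)(t i := p i (t i) + h i)"
  shows "point_val r T f q = point_val r T f p + (\<Sum>i<r. scale (fst f i (t i)) (h i))"
proof -
  have "(\<Sum>i<r. block_val T (fst f) i (q i))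
      = (\<Sum>i<r. block_val T (fst f) i (p i) + scale (fst f i (t i)) (h i))"
    using assms by (intro sum.cong) (simp_all add: block_val_upd)
  then show ?thesis
    by (simp add: point_val_def sum.distrib algebra_simps)
qed

lemma sign_stable_radius_finite:
  fixes x :: "'a \<Rightarrow> 'm" and c :: "'a \<Rightarrow> nat \<Rightarrow> 'l"
  assumes "finite F" and "0 < (e::'m)" and zero: "\<forall>f\<in>F. x f = 0 \<longrightarrow> (\<forall>i<r. c f i = 0)"
  shows "\<exists>\<epsilon>>0. \<forall>h. (\<forall>i<r. 0 \<le> h i \<and> h i \<le> \<epsilon>) \<longrightarrow>
           (\<forall>f\<in>F. sign (x f + (\<Sum>i<r. scale (c f i) (h i))) = sign (x f))"
proof -
  have "\<exists>\<epsilon>>0. \<forall>h. (\<forall>i<r. 0 \<le> h i \<and> h i \<le> \<epsilon>) \<longrightarrow>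
          sign (x f + (\<Sum>i<r. scale (c f i) (h i))) = sign (x f)" if "f \<in> F" for f
  proof (cases "x f = 0")
    case True
    then show ?thesis
      using zero that \<open>0 < e\<close> by auto
  next
    case False
    then show ?thesis
      by (rule sign_stable_radius)
  qed
  then have "\<forall>f\<in>F. \<exists>\<epsilon>>0. \<forall>h. (\<forall>i<r. 0 \<le> h i \<and> h i \<le> \<epsilon>) \<longrightarrow>
          sign (x f + (\<Sum>i<r. scale (c f i) (h i))) = sign (x f)"
    by blast
  from bchoice[OF this] obtain \<rho> where \<rho>: "\<forall>f\<in>F. 0 < \<rho> f \<and> (\<forall>h. (\<forall>i<r. 0 \<le> h i \<and> h i \<le> \<rho> f) \<longrightarrow>
          sign (x f + (\<Sum>i<r. scale (c f i) (h i))) = sign (x f))" ..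
  define \<epsilon> where "\<epsilon> = Min (insert e (\<rho> ` F))"
  have "0 < \<epsilon>"
    unfolding \<epsilon>_def using assms(1,2) \<rho> by (subst Min_gr_iff) auto
  moreover have "\<epsilon> \<le> \<rho> f" if "f \<in> F" for f
    unfolding \<epsilon>_def using assms(1) that by (intro Min_le) auto
  then have "sign (x f + (\<Sum>i<r. scale (c f i) (h i))) = sign (x f)"
    if "f \<in> F" "\<forall>i<r. 0 \<le> h i \<and> h i \<le> \<epsilon>" for f h
    using conjunct2[OF bspec[OF \<rho> \<open>f \<in> F\<close>]] that order_trans by blast
  ultimately show ?thesis
    by blast
qed

lemma perturbation_grid_subset:
  assumes fin: "\<forall>i<r. finite (T i)" and t: "\<forall>i<r. t i \<in> T i"
    and inv: "sign_invariant r T F E" and "p \<in> E" and sub: "E \<subseteq> points r T"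
    and stable: "\<forall>h. (\<forall>i<r. 0 \<le> h i \<and> h i \<le> \<epsilon>) \<longrightarrow>
       (\<forall>f\<in>F. sign (point_val r T f p + (\<Sum>i<r. scale (fst f i (t i)) (h i))) = sign (point_val r T f p))"
  shows "PiE {..<r} (\<lambda>i. (\<lambda>h. (p i)(t i := p i (t i) + h)) ` {h. 0 < h \<and> h < \<epsilon>}) \<subseteq> E"
proof
  fix q assume q: "q \<in> PiE {..<r} (\<lambda>i. (\<lambda>h. (p i)(t i := p i (t i) + h)) ` {h. 0 < h \<and> h < \<epsilon>})"
  have "\<forall>i\<in>{..<r}. \<exists>h. (0 < h \<and> h < \<epsilon>) \<and> q i = (p i)(t i := p i (t i) + h)"
    using PiE_mem[OF q] by blast
  from bchoice[OF this] obtain h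
    where h: "\<forall>i\<in>{..<r}. (0 < h i \<and> h i < \<epsilon>) \<and> q i = (p i)(t i := p i (t i) + h i)" ..
  have "p \<in> points r T"
    using sub \<open>p \<in> E\<close> by blast
  then have "q \<in> points r T"
    using q t h by (auto simp: points_def PiE_iff extensional_def)
  have "sign (point_val r T f p) = sign (point_val r T f q)" if "f \<in> F" for f
  proof -
    have "\<forall>i<r. 0 \<le> h i \<and> h i \<le> \<epsilon>"
      using h by (simp add: order_less_imp_le)
    moreover have "point_val r T f q = point_val r T f p + (\<Sum>i<r. scale (fst f i (t i)) (h i))"
      using h by (intro point_val_perturb[OF fin t]) auto
    ultimately show ?thesis
      using stable that by simp
  qed
  then show "q \<in> E"
    using inv \<open>p \<in> points r T\<close> \<open>q \<in> points r T\<close> \<open>p \<in> E\<close> unfolding sign_invariant_def by blast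
qed

text \<open>If no affine form of \<open>F\<close> with a nonzero linear part vanishes at \<open>p \<in> E\<close>, then
  perturbing one coordinate of each block of \<open>p\<close> by a small positive amount preserves all
  signs, so \<open>E\<close> contains an infinite grid of such perturbations.\<close>

lemma exists_vanishing_nonconstant:
  assumes "0 < (e::'m)" and ne: "\<forall>i<r. T i \<noteq> {}" and fin: "\<forall>i<r. finite (T i)" and "finite F"
    and inv: "sign_invariant r T F E" and sub: "E \<subseteq> points r T"
    and no_grid: "\<not> contains_infinite_grid r T E" and "p \<in> E"
  shows "\<exists>f\<in>F. point_val r T f p = 0 \<and> nonconstant r T (fst f)"
proof (rule ccontr)
  assume none: "\<not> ?thesis"
  define t where "t i = (SOME s. s \<in> T i)" for i
  have t: "\<forall>i<r. t i \<in> T i"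
    using ne by (simp add: t_def some_in_eq)
  then have "\<forall>f\<in>F. point_val r T f p = 0 \<longrightarrow> (\<forall>i<r. fst f i (t i) = 0)"
    using none by (auto simp: nonconstant_def)
  then have "\<exists>\<epsilon>>0. \<forall>h. (\<forall>i<r. 0 \<le> h i \<and> h i \<le> \<epsilon>) \<longrightarrow>
      (\<forall>f\<in>F. sign (point_val r T f p + (\<Sum>i<r. scale (fst f i (t i)) (h i))) = sign (point_val r T f p))"
    by (intro sign_stable_radius_finite[OF \<open>finite F\<close> \<open>0 < e\<close>])
  then obtain \<epsilon> where "0 < \<epsilon>" and stable: "\<forall>h. (\<forall>i<r. 0 \<le> h i \<and> h i \<le> \<epsilon>) \<longrightarrow>
      (\<forall>f\<in>F. sign (point_val r T f p + (\<Sum>i<r. scale (fst f i (t i)) (h i))) = sign (point_val r T f p))"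
    by blast
  define G where "G i = (\<lambda>h. (p i)(t i := p i (t i) + h)) ` {h. 0 < h \<and> h < \<epsilon>}" for i
  have "PiE {..<r} G \<subseteq> E"
    unfolding G_def by (rule perturbation_grid_subset[OF fin t inv \<open>p \<in> E\<close> sub stable])
  moreover have "G i \<subseteq> PiE (T i) (\<lambda>_. UNIV) \<and> infinite (G i)" if "i < r" for i
  proof
    have "p \<in> points r T"
      using sub \<open>p \<in> E\<close> by blast
    then have "p i \<in> PiE (T i) (\<lambda>_. UNIV)"
      using PiE_mem[of p "{..<r}"] that by (simp add: points_def)
    then show "G i \<subseteq> PiE (T i) (\<lambda>_. UNIV)"
      using t that by (auto simp: G_def PiE_iff extensional_def)
    show "infinite (G i)"
      unfolding G_def by (rule infinite_perturbations[OF \<open>0 < \<epsilon>\<close>])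
  qed
  ultimately have "contains_infinite_grid r T E"
    unfolding contains_infinite_grid_def by (intro exI[of _ G]) simp
  then show False
    using no_grid by contradiction
qed

text \<open>The bound \<open>\<alpha>\<close> may depend on the linear parts \<open>A\<close> of the affine forms (one form per entry),
  but not on their constants: the induction changes the constants.\<close>

definition zarankiewicz_bound :: "nat \<Rightarrow> (nat \<Rightarrow> nat set) \<Rightarrow> (nat \<Rightarrow> nat \<Rightarrow> 'l) list \<Rightarrow> real \<Rightarrow> bool" where
  "zarankiewicz_bound r T A \<alpha> \<longleftrightarrow>
     (\<forall>Fs E B. map fst Fs = A \<longrightarrow> E \<subseteq> points r T \<longrightarrow> sign_invariant r T (set Fs) E \<longrightarrow>
        \<not> contains_infinite_grid r T E \<longrightarrow> finite_grid_factors r T B \<longrightarrow>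
        real (card (E \<inter> PiE {..<r} B)) \<le> \<alpha> * grid_delta r B)"

end

lemma card_grid_le_grid_delta:
  assumes "finite_grid_factors r T B" and "r = 0 \<or> (\<exists>j<r. card (B j) \<le> 1)"
  shows "real (card (E \<inter> PiE {..<r} B)) \<le> grid_delta r B"
proof -
  have fin: "\<forall>i<r. finite (B i)"
    using assms(1) by (simp add: finite_grid_factors_def)
  then have "card (E \<inter> PiE {..<r} B) \<le> card (PiE {..<r} B)"
    by (intro card_mono finite_PiE) auto
  then show ?thesis
    using card_PiE_le_grid_delta[OF fin assms(2)] by linarith
qed

lemma nontrivial_grid_factors:
  fixes B :: "nat \<Rightarrow> (nat \<Rightarrow> 'a) set"
  assumes "finite_grid_factors r T B" and "i < r" and "1 < card (B i)"
  shows "T i \<noteq> {}" and "\<exists>x y :: 'a. x \<noteq> y"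
proof -
  have "finite (B i)"
    using assms(3) card.infinite by force
  then obtain u v where uv: "u \<in> B i" "v \<in> B i" "u \<noteq> v"
    using assms(3) card_le_Suc0_iff_eq[of "B i"] by auto
  moreover have "B i \<subseteq> PiE (T i) (\<lambda>_. UNIV :: 'a set)"
    using assms(1,2) by (simp add: finite_grid_factors_def)
  ultimately show "T i \<noteq> {}"
    by (metis PiE_empty_domain singletonD subsetD)
  show "\<exists>x y :: 'a. x \<noteq> y"
    using uv(3) by auto
qed

section \<open>Pivoting on a linear form\<close>

text \<open>In each block \<open>j\<close> where the linear form \<open>a\<close> does not vanish, a pivot
  coordinate with \<open>a j (pivot j) \<noteq> 0\<close> is solved for. Given prescribed block values \<open>w j\<close> of
  \<open>a\<close>, the map \<open>lift w\<close> reinserts the pivot coordinates into a point of the reduced blocks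
  \<open>T'\<close>, and every affine form becomes an affine form \<open>reduce_aff w f\<close> on the reduced blocks.\<close>

locale pivoting = ovs scale
  for scale :: "'l::{division_ring,linordered_ring_strict} \<Rightarrow> 'm::linordered_ab_group_add \<Rightarrow> 'm" +
  fixes r :: nat and T :: "nat \<Rightarrow> nat set" and a :: "nat \<Rightarrow> nat \<Rightarrow> 'l"
  assumes finite_blocks: "i < r \<Longrightarrow> finite (T i)"
begin

definition support :: "nat set" where
  "support = {j. j < r \<and> (\<exists>t\<in>T j. a j t \<noteq> 0)}"

definition pivot :: "nat \<Rightarrow> nat" where
  "pivot j = (SOME t. t \<in> T j \<and> a j t \<noteq> 0)"

definition T' :: "nat \<Rightarrow> nat set" where
  "T' j = (if j \<in> support then T j - {pivot j} else T j)"

definition lift_block :: "(nat \<Rightarrow> 'm) \<Rightarrow> nat \<Rightarrow> (nat \<Rightarrow> 'm) \<Rightarrow> nat \<Rightarrow> 'm" where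
  "lift_block w j z =
     (if j \<in> support
      then z(pivot j := scale (inverse (a j (pivot j))) (w j - block_val T' a j z))
      else z)"

definition lift :: "(nat \<Rightarrow> 'm) \<Rightarrow> (nat \<Rightarrow> nat \<Rightarrow> 'm) \<Rightarrow> nat \<Rightarrow> nat \<Rightarrow> 'm" where
  "lift w y = (\<lambda>j. lift_block w j (y j))"

definition reduce_form :: "(nat \<Rightarrow> nat \<Rightarrow> 'l) \<Rightarrow> nat \<Rightarrow> nat \<Rightarrow> 'l" where
  "reduce_form b =
     (\<lambda>j t. if j \<in> support then b j t - b j (pivot j) * inverse (a j (pivot j)) * a j t else b j t)"

definition reduce_aff :: "(nat \<Rightarrow> 'm) \<Rightarrow> (nat \<Rightarrow> nat \<Rightarrow> 'l) \<times> 'm \<Rightarrow> (nat \<Rightarrow> nat \<Rightarrow> 'l) \<times> 'm" where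
  "reduce_aff w f =
     (reduce_form (fst f),
      snd f + (\<Sum>j\<in>support. scale (fst f j (pivot j) * inverse (a j (pivot j))) (w j)))"

lemma support_subset: "support \<subseteq> {..<r}"
  by (auto simp: support_def)

lemma pivot:
  assumes "j \<in> support"
  shows "pivot j \<in> T j" and "a j (pivot j) \<noteq> 0"
proof -
  have "\<exists>t. t \<in> T j \<and> a j t \<noteq> 0"
    using assms by (auto simp: support_def)
  then have "pivot j \<in> T j \<and> a j (pivot j) \<noteq> 0"
    unfolding pivot_def by (rule someI_ex)
  then show "pivot j \<in> T j" and "a j (pivot j) \<noteq> 0"
    by auto
qed

lemma T_eq_insert_pivot:
  assumes "j \<in> support"
  shows "T j = insert (pivot j) (T' j)" and "pivot j \<notin> T' j"
  using pivot[OF assms] assms by (auto simp: T'_def)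

lemma T'_subset: "T' j \<subseteq> T j"
  by (auto simp: T'_def)

lemma finite_T': "i < r \<Longrightarrow> finite (T' i)"
  using finite_blocks T'_subset by (rule finite_subset[rotated])

lemma sum_card_T'_less:
  assumes "nonconstant r T a"
  shows "(\<Sum>i<r. card (T' i)) < (\<Sum>i<r. card (T i))"
proof (rule sum_strict_mono_ex1)
  show "\<forall>i\<in>{..<r}. card (T' i) \<le> card (T i)"
    using finite_blocks T'_subset by (simp add: card_mono)
  obtain j where "j \<in> support"
    using assms by (auto simp: nonconstant_def support_def)
  then have "card (T j) = Suc (card (T' j))" "j < r"
    using T_eq_insert_pivot finite_T' support_subset by auto
  then show "\<exists>i\<in>{..<r}. card (T' i) < card (T i)"
    by (intro bexI[of _ j]) auto
qed simp

lemma block_val_lift_block: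
  assumes "j \<in> support"
  shows "block_val T b j (lift_block w j z)
       = block_val T' (reduce_form b) j z + scale (b j (pivot j) * inverse (a j (pivot j))) (w j)"
proof -
  let ?s = "pivot j"
  let ?v = "scale (inverse (a j ?s)) (w j - block_val T' a j z)"
  let ?c = "b j ?s * inverse (a j ?s)"
  have T: "T j = insert ?s (T' j)" "?s \<notin> T' j"
    using T_eq_insert_pivot[OF assms] by auto
  have fin: "finite (T' j)"
    using finite_T' assms support_subset by auto
  let ?X = "\<Sum>t\<in>T' j. scale (b j t) (z t)" and ?Y = "\<Sum>t\<in>T' j. scale (?c * a j t) (z t)"
  have "block_val T b j (lift_block w j z) = scale (b j ?s) ?v + (\<Sum>t\<in>T' j. scale (b j t) ((z(?s := ?v)) t))"
    unfolding block_val_def lift_block_def using assms T fin by (simp add: sum.insert)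
  also have "(\<Sum>t\<in>T' j. scale (b j t) ((z(?s := ?v)) t)) = ?X"
    using T(2) by (intro sum.cong) auto
  also have "scale (b j ?s) ?v = scale ?c (w j) - ?Y"
    by (simp add: block_val_def scale_scale scale_diff_right scale_sum_right mult.assoc)
  finally have lifted: "block_val T b j (lift_block w j z) = scale ?c (w j) - ?Y + ?X" .
  have reduced: "block_val T' (reduce_form b) j z = ?X - ?Y"
    unfolding block_val_def reduce_form_def using assms by (simp add: scale_diff_left sum_subtractf)
  show ?thesis
    unfolding lifted reduced by (simp add: algebra_simps)
qed

lemma block_val_lift_block_outside:
  "j \<notin> support \<Longrightarrow> block_val T b j (lift_block w j z) = block_val T' (reduce_form b) j z"
  by (simp add: block_val_def lift_block_def reduce_form_def T'_def)

lemma block_val_a_lift_block: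
  assumes "j \<in> support"
  shows "block_val T a j (lift_block w j z) = w j"
proof -
  have "block_val T' (reduce_form a) j z = 0"
    using assms pivot(2)[OF assms] by (simp add: block_val_def reduce_form_def right_inverse)
  then show ?thesis
    using block_val_lift_block[OF assms, of a w z] pivot(2)[OF assms] by (simp add: right_inverse)
qed

lemma point_val_lift: "point_val r T f (lift w y) = point_val r T' (reduce_aff w f) y"
proof -
  let ?c = "\<lambda>j. scale (fst f j (pivot j) * inverse (a j (pivot j))) (w j)"
  have "(\<Sum>i<r. block_val T (fst f) i (lift_block w i (y i)))
      = (\<Sum>i<r. block_val T' (reduce_form (fst f)) i (y i) + (if i \<in> support then ?c i else 0))"
    by (intro sum.cong) (simp_all add: block_val_lift_block block_val_lift_block_outside)
  also have "\<dots> = (\<Sum>i<r. block_val T' (reduce_form (fst f)) i (y i)) + (\<Sum>i\<in>support. ?c i)"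
    using support_subset by (simp add: sum.distrib sum.If_cases Int_absorb1)
  finally show ?thesis
    by (simp add: point_val_def lift_def reduce_aff_def algebra_simps)
qed

lemma lift_block_PiE:
  assumes "z \<in> PiE (T' j) (\<lambda>_. UNIV)"
  shows "lift_block w j z \<in> PiE (T j) (\<lambda>_. UNIV)"
proof (cases "j \<in> support")
  case True
  then show ?thesis
    using assms pivot(1)[OF True] by (auto simp: lift_block_def T'_def PiE_iff extensional_def)
next
  case False
  then show ?thesis
    using assms by (simp add: lift_block_def T'_def)
qed

lemma inj_on_lift_block: "inj_on (lift_block w j) (PiE (T' j) (\<lambda>_. UNIV))"
proof (rule inj_onI)
  fix z z'
  assume z: "z \<in> PiE (T' j) (\<lambda>_. UNIV)" "z' \<in> PiE (T' j) (\<lambda>_. UNIV)"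
    and eq: "lift_block w j z = lift_block w j z'"
  show "z = z'"
  proof
    fix t
    show "z t = z' t"
    proof (cases "j \<in> support \<and> t = pivot j")
      case True
      then show ?thesis
        using z T_eq_insert_pivot(2) by (auto simp: PiE_iff extensional_def)
    next
      case False
      then show ?thesis
        using fun_cong[OF eq, of t] by (auto simp: lift_block_def split: if_splits)
    qed
  qed
qed

lemma lift_in_points: "y \<in> points r T' \<Longrightarrow> lift w y \<in> points r T"
  using lift_block_PiE support_subset
  by (auto simp: points_def lift_def PiE_iff lift_block_def extensional_def)

lemma exists_lift_eq:
  assumes p: "p \<in> points r T" and w: "\<forall>j\<in>support. block_val T a j (p j) = w j"
  shows "\<exists>y\<in>points r T'. lift w y = p"
proof
  define y where "y j = (if j \<in> support then (p j)(pivot j := undefined) else p j)" for j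
  show "y \<in> points r T'"
    using p support_subset unfolding points_iff y_def T'_def by auto
  show "lift w y = p"
  proof
    fix j
    show "lift w y j = p j"
    proof (cases "j \<in> support")
      case True
      let ?s = "pivot j"
      have T: "T j = insert ?s (T' j)" "?s \<notin> T' j"
        using T_eq_insert_pivot[OF True] by auto
      have "finite (T' j)"
        using finite_T' True support_subset by auto
      have "w j = block_val T a j (p j)"
        using w True by simp
      also have "\<dots> = scale (a j ?s) (p j ?s) + (\<Sum>t\<in>T' j. scale (a j t) (p j t))"
        unfolding block_val_def using T \<open>finite (T' j)\<close> by (simp add: sum.insert)
      also have "(\<Sum>t\<in>T' j. scale (a j t) (p j t)) = block_val T' a j (y j)"
        unfolding block_val_def y_def using True T(2) by (auto intro!: sum.cong)
      finally have "w j = scale (a j ?s) (p j ?s) + block_val T' a j (y j)" .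
      then have "scale (inverse (a j ?s)) (w j - block_val T' a j (y j)) = p j ?s"
        using pivot(2)[OF True] by simp
      then show ?thesis
        using True by (auto simp: lift_def lift_block_def y_def)
    next
      case False
      then show ?thesis
        by (simp add: lift_def lift_block_def y_def)
    qed
  qed
qed

definition pullback :: "(nat \<Rightarrow> 'm) \<Rightarrow> (nat \<Rightarrow> nat \<Rightarrow> 'm) set \<Rightarrow> (nat \<Rightarrow> nat \<Rightarrow> 'm) set" where
  "pullback w E = {y \<in> points r T'. lift w y \<in> E}"

definition pullback_factor :: "(nat \<Rightarrow> 'm) \<Rightarrow> (nat \<Rightarrow> (nat \<Rightarrow> 'm) set) \<Rightarrow> nat \<Rightarrow> (nat \<Rightarrow> 'm) set" where
  "pullback_factor w B j = {z \<in> PiE (T' j) (\<lambda>_. UNIV). lift_block w j z \<in> B j}"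

definition fibre_factor :: "(nat \<Rightarrow> 'm) \<Rightarrow> (nat \<Rightarrow> (nat \<Rightarrow> 'm) set) \<Rightarrow> nat \<Rightarrow> (nat \<Rightarrow> 'm) set" where
  "fibre_factor w B j = (if j \<in> support then {z \<in> B j. block_val T a j z = w j} else B j)"

lemma lift_in_grid_iff:
  assumes "y \<in> points r T'"
  shows "lift w y \<in> PiE {..<r} B \<longleftrightarrow> y \<in> PiE {..<r} (pullback_factor w B)"
proof -
  have "y i \<in> PiE (T' i) (\<lambda>_. UNIV)" if "i < r" for i
    using PiE_mem[OF assms[unfolded points_def]] that by simp
  moreover have "lift w y \<in> extensional {..<r}" "y \<in> extensional {..<r}"
    using assms lift_in_points[OF assms] by (simp_all add: points_def PiE_iff)
  ultimately show ?thesis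
    by (auto simp: PiE_iff pullback_factor_def lift_def)
qed

lemma card_pullback_factor_le:
  assumes "finite (B j)"
  shows "finite (pullback_factor w B j)" and "card (pullback_factor w B j) \<le> card (fibre_factor w B j)"
proof -
  have inj: "inj_on (lift_block w j) (pullback_factor w B j)"
    using inj_on_lift_block by (rule inj_on_subset) (auto simp: pullback_factor_def)
  have "lift_block w j ` pullback_factor w B j \<subseteq> fibre_factor w B j"
    by (auto simp: pullback_factor_def fibre_factor_def block_val_a_lift_block)
  moreover have "finite (fibre_factor w B j)"
    using assms by (simp add: fibre_factor_def)
  ultimately show "finite (pullback_factor w B j)" "card (pullback_factor w B j) \<le> card (fibre_factor w B j)"
    using inj finite_imageD finite_subset card_inj_on_le by (blast, metis)
qed

lemma finite_grid_factors_pullback: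
  "finite_grid_factors r T B \<Longrightarrow> finite_grid_factors r T' (pullback_factor w B)"
  using card_pullback_factor_le(1) by (auto simp: finite_grid_factors_def pullback_factor_def)

lemma sign_invariant_pullback:
  assumes "sign_invariant r T F E"
  shows "sign_invariant r T' (reduce_aff w ` F) (pullback w E)"
  using assms lift_in_points by (simp add: sign_invariant_def pullback_def point_val_lift)

lemma contains_infinite_grid_pullback:
  assumes "contains_infinite_grid r T' (pullback w E)"
  shows "contains_infinite_grid r T E"
proof -
  obtain G where G: "\<forall>i<r. G i \<subseteq> PiE (T' i) (\<lambda>_. UNIV) \<and> infinite (G i)"
    and GE: "PiE {..<r} G \<subseteq> pullback w E"
    using assms unfolding contains_infinite_grid_def by blast
  define H where "H i = lift_block w i ` G i" for i
  have "H i \<subseteq> PiE (T i) (\<lambda>_. UNIV) \<and> infinite (H i)" if "i < r" for i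
  proof
    show "H i \<subseteq> PiE (T i) (\<lambda>_. UNIV)"
      using G that by (auto simp: H_def intro!: lift_block_PiE)
    have "inj_on (lift_block w i) (G i)"
      using inj_on_lift_block G that by (meson inj_on_subset)
    then show "infinite (H i)"
      using G that finite_imageD unfolding H_def by blast
  qed
  moreover have "PiE {..<r} H \<subseteq> E"
  proof
    fix q assume q: "q \<in> PiE {..<r} H"
    have "\<forall>i\<in>{..<r}. \<exists>z. z \<in> G i \<and> q i = lift_block w i z"
      using PiE_mem[OF q] by (auto simp: H_def)
    from bchoice[OF this] obtain y where y: "\<forall>i\<in>{..<r}. y i \<in> G i \<and> q i = lift_block w i (y i)" ..
    have "restrict y {..<r} \<in> PiE {..<r} G"
      using y by simp
    then have "lift w (restrict y {..<r}) \<in> E"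
      using GE unfolding pullback_def by blast
    moreover have "lift w (restrict y {..<r}) = q"
    proof
      fix j
      show "lift w (restrict y {..<r}) j = q j"
        using y q support_subset by (cases "j < r") (auto simp: lift_def lift_block_def PiE_iff extensional_def)
    qed
    ultimately show "q \<in> E"
      by simp
  qed
  ultimately show ?thesis
    unfolding contains_infinite_grid_def by blast
qed

lemma card_pullback_grid_le:
  assumes bound: "zarankiewicz_bound r T' (map reduce_form A) \<alpha>" and "0 \<le> \<alpha>"
    and Fs: "map fst Fs = A" and inv: "sign_invariant r T (set Fs) E"
    and no_grid: "\<not> contains_infinite_grid r T E" and B: "finite_grid_factors r T B"
  shows "real (card (pullback w E \<inter> PiE {..<r} (pullback_factor w B))) \<le> \<alpha> * grid_delta r (fibre_factor w B)"
proof -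
  have "map fst (map (reduce_aff w) Fs) = map reduce_form A"
    using Fs by (auto simp: reduce_aff_def)
  moreover have "pullback w E \<subseteq> points r T'"
    by (auto simp: pullback_def)
  moreover have "sign_invariant r T' (set (map (reduce_aff w) Fs)) (pullback w E)"
    using sign_invariant_pullback[OF inv] by simp
  moreover have "\<not> contains_infinite_grid r T' (pullback w E)"
    using contains_infinite_grid_pullback no_grid by blast
  ultimately have "real (card (pullback w E \<inter> PiE {..<r} (pullback_factor w B)))
      \<le> \<alpha> * grid_delta r (pullback_factor w B)"
    by (rule bound[unfolded zarankiewicz_bound_def, rule_format, OF _ _ _ _ finite_grid_factors_pullback[OF B]])
  also have "\<dots> \<le> \<alpha> * grid_delta r (fibre_factor w B)"
    using \<open>0 \<le> \<alpha>\<close> card_pullback_factor_le(2) B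
    by (intro mult_left_mono grid_delta_mono) (auto simp: finite_grid_factors_def)
  finally show ?thesis .
qed

definition block_vals :: "(nat \<Rightarrow> nat \<Rightarrow> 'm) \<Rightarrow> nat \<Rightarrow> 'm" where
  "block_vals p = (\<lambda>j. if j \<in> support then block_val T a j (p j) else 0)"

lemma card_fibre_le:
  assumes "zarankiewicz_bound r T' (map reduce_form A) \<alpha>" and "0 \<le> \<alpha>"
    and "map fst Fs = A" and sub: "E \<subseteq> points r T" and "sign_invariant r T (set Fs) E"
    and "\<not> contains_infinite_grid r T E" and B: "finite_grid_factors r T B"
  shows "real (card {p \<in> E \<inter> PiE {..<r} B. block_vals p = w}) \<le> \<alpha> * grid_delta r (fibre_factor w B)"
proof -
  let ?E' = "pullback w E \<inter> PiE {..<r} (pullback_factor w B)"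
  have "{p \<in> E \<inter> PiE {..<r} B. block_vals p = w} \<subseteq> lift w ` ?E'"
  proof
    fix p assume p: "p \<in> {p \<in> E \<inter> PiE {..<r} B. block_vals p = w}"
    then have "block_vals p = w"
      by simp
    then have "\<forall>j\<in>support. block_val T a j (p j) = w j"
      by (auto simp: block_vals_def dest: fun_cong)
    moreover have "p \<in> points r T"
      using p sub by blast
    ultimately obtain y where y: "y \<in> points r T'" "lift w y = p"
      using exists_lift_eq by blast
    then have "y \<in> ?E'"
      using p lift_in_grid_iff[OF y(1)] by (auto simp: pullback_def)
    then show "p \<in> lift w ` ?E'"
      using y(2) by blast
  qed
  moreover have "finite ?E'"
    using card_pullback_factor_le(1) B
    by (intro finite_Int disjI2 finite_PiE) (auto simp: finite_grid_factors_def)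
  ultimately have "card {p \<in> E \<inter> PiE {..<r} B. block_vals p = w} \<le> card ?E'"
    by (meson card_image_le card_mono finite_imageI le_trans)
  then show ?thesis
    using card_pullback_grid_le[OF assms(1-3,5-7), of w] by linarith
qed

lemma sum_block_vals:
  assumes "point_val r T (a, c) p = 0"
  shows "(\<Sum>j\<in>support. block_vals p j) = - c"
proof -
  have "(\<Sum>i<r. block_val T a i (p i)) = (\<Sum>j\<in>support. block_vals p j)"
    using support_subset
    by (intro sum.mono_neutral_cong_right) (auto simp: block_vals_def support_def block_val_def)
  then show ?thesis
    using assms by (simp add: point_val_def eq_neg_iff_add_eq_0)
qed

text \<open>Distinct vectors of block values on the zero set of \<open>a + c\<close> have the same sum \<open>-c\<close> over
  the support of \<open>a\<close>, so they differ in two blocks of the support.\<close>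

lemma fibre_factors_disjoint:
  assumes "\<forall>p\<in>P. point_val r T (a, c) p = 0"
  shows "\<forall>w\<in>block_vals ` P. \<forall>w'\<in>block_vals ` P. w \<noteq> w' \<longrightarrow>
           (\<forall>I. I \<subseteq> {..<r} \<and> card I = r - 1 \<longrightarrow> (\<exists>i\<in>I. fibre_factor w B i \<inter> fibre_factor w' B i = {}))"
proof (intro ballI impI allI)
  fix w w' I
  assume "w \<in> block_vals ` P" "w' \<in> block_vals ` P" "w \<noteq> w'" and I: "I \<subseteq> {..<r} \<and> card I = r - 1"
  then obtain p p' where p: "p \<in> P" "p' \<in> P" "w = block_vals p" "w' = block_vals p'"
    by blast
  then have "(\<Sum>j\<in>support. w j) = (\<Sum>j\<in>support. w' j)"
    using sum_block_vals[of c p] sum_block_vals[of c p'] assms by simp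
  moreover have "finite support"
    using support_subset finite_subset by blast
  moreover have "\<forall>j. j \<notin> support \<longrightarrow> w j = w' j"
    using p by (simp add: block_vals_def)
  ultimately obtain i where "i \<in> I" "i \<in> support" "w i \<noteq> w' i"
    using equal_sums_differ_in_subset[OF _ support_subset] \<open>w \<noteq> w'\<close> I by blast
  then show "\<exists>i\<in>I. fibre_factor w B i \<inter> fibre_factor w' B i = {}"
    by (intro bexI[of _ i]) (auto simp: fibre_factor_def)
qed

lemma card_zero_set_le:
  assumes "zarankiewicz_bound r T' (map reduce_form A) \<alpha>" and "0 \<le> \<alpha>"
    and "map fst Fs = A" and "E \<subseteq> points r T" and "sign_invariant r T (set Fs) E"
    and "\<not> contains_infinite_grid r T E" and B: "finite_grid_factors r T B"
  shows "real (card {p \<in> E \<inter> PiE {..<r} B. point_val r T (a, c) p = 0}) \<le> \<alpha> * grid_delta r B"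
proof -
  define P where "P = {p \<in> E \<inter> PiE {..<r} B. point_val r T (a, c) p = 0}"
  define W where "W = block_vals ` P"
  have finB: "\<forall>i<r. finite (B i)"
    using B by (simp add: finite_grid_factors_def)
  have "finite P"
    using finB unfolding P_def by (intro finite_subset[OF _ finite_PiE[of "{..<r}" B]]) auto
  then have "finite W"
    by (simp add: W_def)
  have "card P = card (\<Union>w\<in>W. {p \<in> P. block_vals p = w})"
    by (rule arg_cong[where f = card]) (auto simp: W_def)
  also have "\<dots> \<le> (\<Sum>w\<in>W. card {p \<in> P. block_vals p = w})"
    by (rule card_UN_le[OF \<open>finite W\<close>])
  finally have "real (card P) \<le> real (\<Sum>w\<in>W. card {p \<in> P. block_vals p = w})"
    by (rule of_nat_mono)
  also have "\<dots> = (\<Sum>w\<in>W. real (card {p \<in> P. block_vals p = w}))"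
    by (rule of_nat_sum)
  also have "\<dots> \<le> (\<Sum>w\<in>W. \<alpha> * grid_delta r (fibre_factor w B))"
  proof (rule sum_mono)
    fix w
    have "finite {p \<in> E \<inter> PiE {..<r} B. block_vals p = w}"
      using finB by (intro finite_subset[OF _ finite_PiE[of "{..<r}" B]]) auto
    then have "card {p \<in> P. block_vals p = w} \<le> card {p \<in> E \<inter> PiE {..<r} B. block_vals p = w}"
      by (rule card_mono) (auto simp: P_def)
    then show "real (card {p \<in> P. block_vals p = w}) \<le> \<alpha> * grid_delta r (fibre_factor w B)"
      using card_fibre_le[OF assms, of w] by linarith
  qed
  also have "\<dots> = \<alpha> * (\<Sum>w\<in>W. grid_delta r (fibre_factor w B))"
    by (simp add: sum_distrib_left)
  also have "\<dots> \<le> \<alpha> * grid_delta r B"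
  proof (intro mult_left_mono sum_grid_delta_le \<open>finite W\<close> finB \<open>0 \<le> \<alpha>\<close>)
    show "\<forall>w\<in>W. \<forall>i<r. fibre_factor w B i \<subseteq> B i"
      by (auto simp: fibre_factor_def)
    show "\<forall>w\<in>W. \<forall>w'\<in>W. w \<noteq> w' \<longrightarrow>
            (\<forall>I. I \<subseteq> {..<r} \<and> card I = r - 1 \<longrightarrow> (\<exists>i\<in>I. fibre_factor w B i \<inter> fibre_factor w' B i = {}))"
      unfolding W_def by (rule fibre_factors_disjoint[where c = c]) (simp add: P_def)
  qed
  finally show ?thesis
    by (simp add: P_def)
qed

end

section \<open>Induction on the number of coordinates\<close>

context ovs
begin

lemma pivoting_instance: "(\<And>i. i < r \<Longrightarrow> finite (T i)) \<Longrightarrow> pivoting scale r T"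
  by (intro pivoting.intro ovs.intro ordered_vector_space pivoting_axioms.intro)

lemma exists_pos_if_nontrivial: "\<exists>x y :: 'm. x \<noteq> y \<Longrightarrow> \<exists>e :: 'm. 0 < e"
  by (metis diff_gt_0_iff_gt linorder_neqE)

lemma card_grid_le_sum_zero_sets:
  assumes "0 < (e::'m)" and ne: "\<forall>i<r. T i \<noteq> {}" and fin: "\<forall>i<r. finite (T i)"
    and sub: "E \<subseteq> points r T" and inv: "sign_invariant r T (set Fs) E"
    and no_grid: "\<not> contains_infinite_grid r T E" and B: "finite_grid_factors r T B"
  shows "real (card (E \<inter> PiE {..<r} B))
           \<le> (\<Sum>k | k < length Fs \<and> nonconstant r T (fst (Fs ! k)).
                 real (card {p \<in> E \<inter> PiE {..<r} B. point_val r T (Fs ! k) p = 0}))"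
proof -
  define K where "K = {k. k < length Fs \<and> nonconstant r T (fst (Fs ! k))}"
  define P where "P k = {p \<in> E \<inter> PiE {..<r} B. point_val r T (Fs ! k) p = 0}" for k
  have "E \<inter> PiE {..<r} B \<subseteq> (\<Union>k\<in>K. P k)"
  proof
    fix p assume p: "p \<in> E \<inter> PiE {..<r} B"
    then have "\<exists>f\<in>set Fs. point_val r T f p = 0 \<and> nonconstant r T (fst f)"
      by (intro exists_vanishing_nonconstant[OF \<open>0 < e\<close> ne fin _ inv sub no_grid]) auto
    then obtain k where "k < length Fs" "point_val r T (Fs ! k) p = 0" "nonconstant r T (fst (Fs ! k))"
      by (metis in_set_conv_nth)
    then show "p \<in> (\<Union>k\<in>K. P k)"
      using p by (auto simp: K_def P_def)
  qed
  moreover have "finite (\<Union>k\<in>K. P k)"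
    using B by (auto simp: K_def P_def finite_grid_factors_def intro!: finite_subset[OF _ finite_PiE[of "{..<r}" B]])
  ultimately have "card (E \<inter> PiE {..<r} B) \<le> card (\<Union>k\<in>K. P k)"
    by (rule card_mono[rotated])
  also have "\<dots> \<le> (\<Sum>k\<in>K. card (P k))"
    by (rule card_UN_le) (simp add: K_def)
  finally have "real (card (E \<inter> PiE {..<r} B)) \<le> real (\<Sum>k\<in>K. card (P k))"
    by (rule of_nat_mono)
  then show ?thesis
    by (simp add: K_def P_def)
qed

lemma card_grid_le_reduced_bounds:
  assumes fin: "\<And>i. i < r \<Longrightarrow> finite (T i)"
    and K: "K = {k. k < length A \<and> nonconstant r T (A ! k)}"
    and reduced: "\<And>k. k \<in> K \<Longrightarrow> 0 \<le> \<alpha>k k \<and>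
       zarankiewicz_bound r (pivoting.T' r T (A ! k)) (map (pivoting.reduce_form r T (A ! k)) A) (\<alpha>k k)"
    and Fs: "map fst Fs = A" and sub: "E \<subseteq> points r T" and inv: "sign_invariant r T (set Fs) E"
    and no_grid: "\<not> contains_infinite_grid r T E" and B: "finite_grid_factors r T B"
    and nontrivial: "\<not> (r = 0 \<or> (\<exists>j<r. card (B j) \<le> 1))"
  shows "real (card (E \<inter> PiE {..<r} B)) \<le> (\<Sum>k\<in>K. \<alpha>k k) * grid_delta r B"
proof -
  have ne: "\<forall>i<r. T i \<noteq> {}" and "\<exists>x y :: 'm. x \<noteq> y"
    using nontrivial nontrivial_grid_factors[OF B] by (auto simp: not_le)
  then obtain e :: 'm where "0 < e"
    using exists_pos_if_nontrivial by blast
  have K_eq: "K = {k. k < length Fs \<and> nonconstant r T (fst (Fs ! k))}"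
    using Fs K by auto
  have "real (card (E \<inter> PiE {..<r} B))
      \<le> (\<Sum>k\<in>K. real (card {p \<in> E \<inter> PiE {..<r} B. point_val r T (Fs ! k) p = 0}))"
    unfolding K_eq using fin by (intro card_grid_le_sum_zero_sets[OF \<open>0 < e\<close> ne _ sub inv no_grid B]) auto
  also have "\<dots> \<le> (\<Sum>k\<in>K. \<alpha>k k * grid_delta r B)"
  proof (rule sum_mono)
    fix k assume "k \<in> K"
    interpret pivoting scale r T "A ! k"
      using fin by (rule pivoting_instance)
    have "Fs ! k = (A ! k, snd (Fs ! k))"
      using Fs K \<open>k \<in> K\<close> by auto
    then show "real (card {p \<in> E \<inter> PiE {..<r} B. point_val r T (Fs ! k) p = 0}) \<le> \<alpha>k k * grid_delta r B"
      using reduced[OF \<open>k \<in> K\<close>] card_zero_set_le[OF _ _ Fs sub inv no_grid B, of "\<alpha>k k" "snd (Fs ! k)"]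
      by simp
  qed
  also have "\<dots> = (\<Sum>k\<in>K. \<alpha>k k) * grid_delta r B"
    by (simp add: sum_distrib_right)
  finally show ?thesis .
qed

text \<open>The summand \<open>1\<close> of \<open>\<alpha>\<close> covers grids with a factor of at most one element; any other
  grid has two distinct points in a factor, which provides the positive element of \<open>M\<close>
  needed for perturbing.\<close>

lemma zarankiewicz_bound_step:
  assumes fin: "\<And>i. i < r \<Longrightarrow> finite (T i)"
    and reduced: "\<And>k. k < length A \<Longrightarrow> nonconstant r T (A ! k) \<Longrightarrow>
       \<exists>\<alpha>>0. zarankiewicz_bound r (pivoting.T' r T (A ! k)) (map (pivoting.reduce_form r T (A ! k)) A) \<alpha>"
  shows "\<exists>\<alpha>>0. zarankiewicz_bound r T A \<alpha>"
proof -
  define K where "K = {k. k < length A \<and> nonconstant r T (A ! k)}"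
  have "\<forall>k\<in>K. \<exists>\<alpha>>0. zarankiewicz_bound r (pivoting.T' r T (A ! k)) (map (pivoting.reduce_form r T (A ! k)) A) \<alpha>"
    using reduced by (simp add: K_def)
  from bchoice[OF this] obtain \<alpha>k where \<alpha>k: "\<forall>k\<in>K. 0 < \<alpha>k k \<and>
      zarankiewicz_bound r (pivoting.T' r T (A ! k)) (map (pivoting.reduce_form r T (A ! k)) A) (\<alpha>k k)" ..
  define \<alpha> where "\<alpha> = 1 + (\<Sum>k\<in>K. \<alpha>k k)"
  have "0 \<le> (\<Sum>k\<in>K. \<alpha>k k)"
    using \<alpha>k by (intro sum_nonneg) (simp add: less_imp_le)
  have "real (card (E \<inter> PiE {..<r} B)) \<le> \<alpha> * grid_delta r B"
    if "map fst Fs = A" "E \<subseteq> points r T" "sign_invariant r T (set Fs) E"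
      "\<not> contains_infinite_grid r T E" and B: "finite_grid_factors r T B" for Fs E B
  proof (cases "r = 0 \<or> (\<exists>j<r. card (B j) \<le> 1)")
    case True
    then have "real (card (E \<inter> PiE {..<r} B)) \<le> grid_delta r B"
      by (rule card_grid_le_grid_delta[OF B])
    then show ?thesis
      using grid_delta_nonneg[of r B] \<open>0 \<le> (\<Sum>k\<in>K. \<alpha>k k)\<close>
      by (simp add: \<alpha>_def distrib_right mult_nonneg_nonneg add_increasing2)
  next
    case False
    have "real (card (E \<inter> PiE {..<r} B)) \<le> (\<Sum>k\<in>K. \<alpha>k k) * grid_delta r B"
      using bspec[OF \<alpha>k] by (intro card_grid_le_reduced_bounds[OF fin K_def _ that False]) (auto simp: less_imp_le)
    then show ?thesis
      using grid_delta_nonneg[of r B] by (simp add: \<alpha>_def distrib_right)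
  qed
  moreover have "0 < \<alpha>"
    using \<open>0 \<le> (\<Sum>k\<in>K. \<alpha>k k)\<close> by (simp add: \<alpha>_def)
  ultimately show ?thesis
    unfolding zarankiewicz_bound_def by blast
qed

theorem zarankiewicz_bound_exists:
  "(\<And>i. i < r \<Longrightarrow> finite (T i)) \<Longrightarrow> \<exists>\<alpha>>0. zarankiewicz_bound r T A \<alpha>"
proof (induction "\<Sum>i<r. card (T i)" arbitrary: T A rule: less_induct)
  case less
  show ?case
  proof (rule zarankiewicz_bound_step[OF less.prems])
    fix k assume "nonconstant r T (A ! k)"
    interpret pivoting scale r T "A ! k"
      using less.prems by (rule pivoting_instance)
    show "\<exists>\<alpha>>0. zarankiewicz_bound r T' (map reduce_form A) \<alpha>"
      using less.hyps[OF sum_card_T'_less[OF \<open>nonconstant r T (A ! k)\<close>]] finite_T' by blast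
  qed
qed

end

section \<open>From lists of blocks to block points\<close>

lemma sum_lessThan_add: "(\<Sum>v<m + n::nat. g v) = (\<Sum>v<m. g v) + (\<Sum>u<n. g (m + u))"
  by (induction n) (simp_all add: add.assoc)

lemma sum_lessThan_blocks: "(\<Sum>v<(\<Sum>i<r::nat. d i::nat). g v) = (\<Sum>i<r. \<Sum>t<d i. g ((\<Sum>j<i. d j) + t))"
  by (induction r) (simp_all add: sum_lessThan_add)

lemma nth_concat_take:
  "i < length xs \<Longrightarrow> t < length (xs ! i) \<Longrightarrow> concat xs ! (length (concat (take i xs)) + t) = xs ! i ! t"
proof (induction xs arbitrary: i)
  case (Cons x xs)
  then show ?case
    by (cases i) (auto simp: nth_append)
qed simp

lemma length_concat_take_shaped:
  "shaped r d xs \<Longrightarrow> i \<le> r \<Longrightarrow> length (concat (take i xs)) = (\<Sum>j<i. d j)"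
  by (simp add: shaped_def length_concat sum_list_sum_nth atLeast0LessThan min_def)

lemma nth_concat_shaped:
  "shaped r d xs \<Longrightarrow> i < r \<Longrightarrow> t < d i \<Longrightarrow> concat xs ! ((\<Sum>j<i. d j) + t) = xs ! i ! t"
  using nth_concat_take[of i xs t] length_concat_take_shaped[of r d xs i] by (simp add: shaped_def)

lemma length_concat_shaped: "shaped r d xs \<Longrightarrow> length (concat xs) = (\<Sum>i<r. d i)"
  using length_concat_take_shaped[of r d xs r] by (simp add: shaped_def)

lemma inj_on_concat_shaped: "inj_on concat {xs. shaped r d xs}"
proof (rule inj_onI)
  fix xs ys assume "xs \<in> {xs. shaped r d xs}" "ys \<in> {xs. shaped r d xs}" "concat xs = concat ys"
  moreover from this have "\<forall>(x, y)\<in>set (zip xs ys). length x = length y"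
    by (auto simp: shaped_def set_zip)
  ultimately show "xs = ys"
    by (simp add: shaped_def concat_eq_concat_iff)
qed

definition block_fun :: "nat \<Rightarrow> 'a list \<Rightarrow> nat \<Rightarrow> 'a" where
  "block_fun n v = (\<lambda>t\<in>{..<n}. v ! t)"

definition point_fun :: "nat \<Rightarrow> (nat \<Rightarrow> nat) \<Rightarrow> 'a list list \<Rightarrow> nat \<Rightarrow> nat \<Rightarrow> 'a" where
  "point_fun r d xs = (\<lambda>i\<in>{..<r}. block_fun (d i) (xs ! i))"

lemma block_fun_PiE: "block_fun n v \<in> PiE {..<n} (\<lambda>_. UNIV)"
  by (simp add: block_fun_def)

lemma inj_on_block_fun: "inj_on (block_fun n) {v. length v = n}"
proof (rule inj_onI)
  fix u v assume "u \<in> {v. length v = n}" "v \<in> {v. length v = n}" "block_fun n u = block_fun n v"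
  then show "u = v"
    by (metis (mono_tags) block_fun_def lessThan_iff mem_Collect_eq nth_equalityI restrict_apply')
qed

lemma point_fun_in_points: "point_fun r d xs \<in> points r (\<lambda>i. {..<d i})"
  by (simp add: point_fun_def points_def block_fun_PiE)

lemma inj_on_point_fun: "inj_on (point_fun r d) {xs. shaped r d xs}"
proof (rule inj_onI)
  fix xs ys assume "xs \<in> {xs. shaped r d xs}" "ys \<in> {xs. shaped r d xs}" and eq: "point_fun r d xs = point_fun r d ys"
  then have "length xs = r" "length ys = r" "\<forall>i<r. length (xs ! i) = d i \<and> length (ys ! i) = d i"
    by (auto simp: shaped_def)
  moreover have "block_fun (d i) (xs ! i) = block_fun (d i) (ys ! i)" if "i < r" for i
    using fun_cong[OF eq, of i] that by (simp add: point_fun_def)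
  ultimately have "xs ! i = ys ! i" if "i < r" for i
    using that inj_onD[OF inj_on_block_fun, of "d i" "xs ! i" "ys ! i"] by simp
  then show "xs = ys"
    using \<open>length xs = r\<close> \<open>length ys = r\<close> by (simp add: nth_equalityI)
qed

lemma points_eq_image_point_fun: "points r (\<lambda>i. {..<d i}) = point_fun r d ` {xs. shaped r d xs}"
proof
  show "point_fun r d ` {xs. shaped r d xs} \<subseteq> points r (\<lambda>i. {..<d i})"
    using point_fun_in_points by blast
  show "points r (\<lambda>i. {..<d i}) \<subseteq> point_fun r d ` {xs. shaped r d xs}"
  proof
    fix p assume p: "p \<in> points r (\<lambda>i. {..<d i})"
    define xs where "xs = map (\<lambda>i. map (p i) [0..<d i]) [0..<r]"
    have "point_fun r d xs i t = p i t" for i t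
      using p by (cases "i < r"; cases "t < d i") (simp_all add: xs_def point_fun_def block_fun_def points_iff)
    then have "point_fun r d xs = p"
      by blast
    moreover have "shaped r d xs"
      by (simp add: xs_def shaped_def)
    ultimately show "p \<in> point_fun r d ` {xs. shaped r d xs}"
      by blast
  qed
qed

lemma block_fun_map_upt: "f \<in> PiE {..<n} (\<lambda>_. UNIV) \<Longrightarrow> block_fun n (map f [0..<n]) = f"
  by (auto simp: block_fun_def PiE_iff extensional_def)

lemma point_fun_grid:
  assumes E: "E \<subseteq> {xs. shaped r d xs}" and B: "is_grid_factors r d B"
  shows "point_fun r d ` (E \<inter> grid r B) = point_fun r d ` E \<inter> PiE {..<r} (\<lambda>i. block_fun (d i) ` B i)"
proof
  show "point_fun r d ` (E \<inter> grid r B) \<subseteq> point_fun r d ` E \<inter> PiE {..<r} (\<lambda>i. block_fun (d i) ` B i)"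
    by (auto simp: grid_def point_fun_def)
  show "point_fun r d ` E \<inter> PiE {..<r} (\<lambda>i. block_fun (d i) ` B i) \<subseteq> point_fun r d ` (E \<inter> grid r B)"
  proof
    fix p assume p: "p \<in> point_fun r d ` E \<inter> PiE {..<r} (\<lambda>i. block_fun (d i) ` B i)"
    then obtain xs where xs: "xs \<in> E" "p = point_fun r d xs"
      by blast
    have "xs ! i \<in> B i" if "i < r" for i
    proof -
      have "block_fun (d i) (xs ! i) \<in> block_fun (d i) ` B i"
        using PiE_mem[OF p[THEN IntD2], of i] xs(2) that by (simp add: point_fun_def)
      then obtain v where v: "v \<in> B i" "block_fun (d i) (xs ! i) = block_fun (d i) v"
        by (metis imageE)
      moreover have "length v = d i" "length (xs ! i) = d i"
        using v(1) xs(1) E B that by (auto simp: is_grid_factors_def shaped_def)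
      ultimately show ?thesis
        using inj_onD[OF inj_on_block_fun, of "d i" "xs ! i" v] by simp
    qed
    then have "xs \<in> grid r B"
      using xs(1) E by (auto simp: grid_def shaped_def)
    then show "p \<in> point_fun r d ` (E \<inter> grid r B)"
      using xs by blast
  qed
qed

lemma card_grid_point_fun:
  assumes E: "E \<subseteq> {xs. shaped r d xs}" and B: "is_grid_factors r d B"
  shows "card (E \<inter> grid r B) = card (point_fun r d ` E \<inter> PiE {..<r} (\<lambda>i. block_fun (d i) ` B i))"
proof -
  have "inj_on (point_fun r d) (E \<inter> grid r B)"
    by (rule inj_on_subset[OF inj_on_point_fun]) (use E in blast)
  then have "card (point_fun r d ` (E \<inter> grid r B)) = card (E \<inter> grid r B)"
    by (rule card_image)
  then show ?thesis
    using point_fun_grid[OF E B] by simp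
qed

lemma delta_eq_grid_delta_block_fun:
  assumes "is_grid_factors r d B"
  shows "delta r B = grid_delta r (\<lambda>i. block_fun (d i) ` B i)"
proof -
  have "card (block_fun (d i) ` B i) = card (B i)" if "i < r" for i
    using assms that by (intro card_image inj_on_subset[OF inj_on_block_fun]) (auto simp: is_grid_factors_def)
  then have "grid_delta r (\<lambda>i. block_fun (d i) ` B i) = grid_delta r B"
    by (simp add: grid_delta_cong)
  then show ?thesis
    by (simp add: delta_def grid_delta_def)
qed

lemma finite_grid_factors_block_fun:
  "(\<forall>i<r. finite (B i)) \<Longrightarrow> finite_grid_factors r (\<lambda>i. {..<d i}) (\<lambda>i. block_fun (d i) ` B i)"
  by (simp add: finite_grid_factors_def image_subset_iff block_fun_PiE)

lemma contains_infinite_grid_point_fun: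
  assumes E: "E \<subseteq> {xs. shaped r d xs}" and "contains_infinite_grid r (\<lambda>i. {..<d i}) (point_fun r d ` E)"
  shows "\<exists>B. is_grid_factors r d B \<and> (\<forall>i<r. infinite (B i)) \<and> grid r B \<subseteq> E"
proof -
  obtain G where G: "\<forall>i<r. G i \<subseteq> PiE {..<d i} (\<lambda>_. UNIV) \<and> infinite (G i)"
    and GE: "PiE {..<r} G \<subseteq> point_fun r d ` E"
    using assms(2) unfolding contains_infinite_grid_def by blast
  define B where "B i = (\<lambda>f. map f [0..<d i]) ` G i" for i
  have "is_grid_factors r d B"
    by (auto simp: is_grid_factors_def B_def)
  moreover have "infinite (B i)" if "i < r" for i
  proof -
    have "block_fun (d i) (map f [0..<d i]) = f" if "f \<in> G i" for f
      using G \<open>i < r\<close> that by (intro block_fun_map_upt) blast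
    then have "inj_on (\<lambda>f. map f [0..<d i]) (G i)"
      by (rule inj_on_inverseI)
    then show ?thesis
      using G that finite_imageD unfolding B_def by blast
  qed
  moreover have "grid r B \<subseteq> E"
  proof
    fix xs assume xs: "xs \<in> grid r B"
    have "\<forall>i<r. \<exists>f\<in>G i. xs ! i = map f [0..<d i]"
      using xs by (auto simp: grid_def B_def)
    then have "shaped r d xs" "point_fun r d xs \<in> PiE {..<r} G"
      using xs G by (auto simp: grid_def shaped_def point_fun_def block_fun_map_upt subset_iff)
    then obtain ys where "ys \<in> E" "point_fun r d xs = point_fun r d ys"
      using GE by force
    then show "xs \<in> E"
      using inj_onD[OF inj_on_point_fun] E \<open>shaped r d xs\<close> by fastforce
  qed
  ultimately show ?thesis
    by blast
qed

lemma point_fun_mem_iff_concat: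
  assumes "E \<subseteq> {xs. shaped r d xs}" and "shaped r d xs"
  shows "point_fun r d xs \<in> point_fun r d ` E \<longleftrightarrow> concat xs \<in> concat ` E"
proof -
  have "point_fun r d xs \<in> point_fun r d ` E \<longleftrightarrow> xs \<in> E"
    using inj_on_image_mem_iff[OF inj_on_point_fun] assms by blast
  also have "\<dots> \<longleftrightarrow> concat xs \<in> concat ` E"
    using inj_on_image_mem_iff[OF inj_on_concat_shaped] assms by blast
  finally show ?thesis .
qed

context ovs
begin

definition block_aff :: "(nat \<Rightarrow> nat) \<Rightarrow> (nat \<Rightarrow> 'l) \<times> 'm \<Rightarrow> (nat \<Rightarrow> nat \<Rightarrow> 'l) \<times> 'm" where
  "block_aff d f = ((\<lambda>i t. fst f ((\<Sum>j<i. d j) + t)), snd f)"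

lemma aff_val_concat:
  assumes xs: "shaped r d xs" and N: "(\<Sum>i<r. d i) \<le> N"
  shows "aff_val N f (tuple_env (concat xs)) = point_val r (\<lambda>i. {..<d i}) (block_aff d f) (point_fun r d xs)"
proof -
  let ?n = "\<Sum>i<r. d i" and ?env = "tuple_env (concat xs)"
  have len: "length (concat xs) = ?n"
    using xs by (rule length_concat_shaped)
  have "(\<Sum>v<N. scale (fst f v) (?env v)) = (\<Sum>v<?n + (N - ?n). scale (fst f v) (?env v))"
    using N by simp
  also have "\<dots> = (\<Sum>v<?n. scale (fst f v) (?env v))"
    using len by (simp add: sum_lessThan_add tuple_env_def)
  also have "\<dots> = (\<Sum>i<r. \<Sum>t<d i. scale (fst f ((\<Sum>j<i. d j) + t)) (?env ((\<Sum>j<i. d j) + t)))"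
    by (rule sum_lessThan_blocks)
  also have "\<dots> = (\<Sum>i<r. block_val (\<lambda>i. {..<d i}) (fst (block_aff d f)) i (point_fun r d xs i))"
  proof (intro sum.cong refl)
    fix i assume i: "i \<in> {..<r}"
    have "(\<Sum>j<Suc i. d j) \<le> ?n"
      using i by (intro sum_mono2) auto
    then have "(\<Sum>j<i. d j) + t < ?n" if "t < d i" for t
      using that by simp
    then show "(\<Sum>t<d i. scale (fst f ((\<Sum>j<i. d j) + t)) (?env ((\<Sum>j<i. d j) + t)))
             = block_val (\<lambda>i. {..<d i}) (fst (block_aff d f)) i (point_fun r d xs i)"
      using i len xs by (auto simp: block_val_def block_aff_def point_fun_def block_fun_def tuple_env_def
          nth_concat_shaped intro!: sum.cong)
  qed
  finally show ?thesis
    by (simp add: aff_val_def point_val_def block_aff_def)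
qed

lemma sign_invariant_semilinear_prod:
  assumes "semilinear_prod scale r d E"
  shows "\<exists>Fs. sign_invariant r (\<lambda>i. {..<d i}) (set Fs) (point_fun r d ` E)"
proof -
  let ?n = "\<Sum>i<r. d i"
  obtain \<phi> where \<phi>: "concat ` E = {xs. length xs = ?n \<and> fm_sat scale (tuple_env xs) \<phi>}"
    and E: "E \<subseteq> {xs. shaped r d xs}"
    using assms by (auto simp: semilinear_prod_def semilinear_def)
  obtain N where "fm_vars_below N \<phi>" "?n \<le> N"
    using eventually_conj[OF eventually_fm_vars_below eventually_ge_at_top[of ?n]]
    by (auto simp: eventually_sequentially)
  then obtain F where "finite F" and F: "sign_determined N F \<phi>"
    using quantifier_elimination[of N \<phi>] by blast
  then obtain Fs where Fs: "set Fs = block_aff d ` F"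
    using finite_list[of "block_aff d ` F"] by blast
  have mem: "point_fun r d xs \<in> point_fun r d ` E \<longleftrightarrow> fm_sat scale (tuple_env (concat xs)) \<phi>"
    if "shaped r d xs" for xs
    using point_fun_mem_iff_concat[OF E that] \<phi> length_concat_shaped[OF that] by simp
  have "sign_invariant r (\<lambda>i. {..<d i}) (set Fs) (point_fun r d ` E)"
    unfolding sign_invariant_def
  proof (intro ballI impI)
    fix p q
    assume "p \<in> points r (\<lambda>i. {..<d i})" "q \<in> points r (\<lambda>i. {..<d i})"
      and signs: "\<forall>f\<in>set Fs. sign (point_val r (\<lambda>i. {..<d i}) f p) = sign (point_val r (\<lambda>i. {..<d i}) f q)"
    then obtain xs ys where xs: "shaped r d xs" "p = point_fun r d xs" and ys: "shaped r d ys" "q = point_fun r d ys"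
      unfolding points_eq_image_point_fun by blast
    have "\<forall>f\<in>F. sign (aff_val N f (tuple_env (concat xs))) = sign (aff_val N f (tuple_env (concat ys)))"
      using signs Fs xs ys \<open>?n \<le> N\<close> by (simp add: aff_val_concat)
    then have "fm_sat scale (tuple_env (concat xs)) \<phi> \<longleftrightarrow> fm_sat scale (tuple_env (concat ys)) \<phi>"
      using F unfolding sign_determined_def by blast
    then show "p \<in> point_fun r d ` E \<longleftrightarrow> q \<in> point_fun r d ` E"
      using mem xs ys by simp
  qed
  then show ?thesis ..
qed

lemma card_list_grid_le:
  assumes bound: "zarankiewicz_bound r (\<lambda>i. {..<d i}) (map fst Fs) \<alpha>"
    and E: "E \<subseteq> {xs. shaped r d xs}" and inv: "sign_invariant r (\<lambda>i. {..<d i}) (set Fs) (point_fun r d ` E)"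
    and no_grid: "\<nexists>B. is_grid_factors r d B \<and> (\<forall>i<r. infinite (B i)) \<and> grid r B \<subseteq> E"
    and B: "is_grid_factors r d B" "\<forall>i<r. finite (B i)"
  shows "real (card (E \<inter> grid r B)) \<le> \<alpha> * delta r B"
proof -
  have "point_fun r d ` E \<subseteq> points r (\<lambda>i. {..<d i})"
    using point_fun_in_points by blast
  moreover have "\<not> contains_infinite_grid r (\<lambda>i. {..<d i}) (point_fun r d ` E)"
    using contains_infinite_grid_point_fun[OF E] no_grid by meson
  moreover have "finite_grid_factors r (\<lambda>i. {..<d i}) (\<lambda>i. block_fun (d i) ` B i)"
    using B(2) by (rule finite_grid_factors_block_fun)
  ultimately have "real (card (point_fun r d ` E \<inter> PiE {..<r} (\<lambda>i. block_fun (d i) ` B i)))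
      \<le> \<alpha> * grid_delta r (\<lambda>i. block_fun (d i) ` B i)"
    by (rule bound[unfolded zarankiewicz_bound_def, rule_format, OF refl _ inv])
  then show ?thesis
    using card_grid_point_fun[OF E B(1)] delta_eq_grid_delta_block_fun[OF B(1)] by simp
qed

end

theorem corollary2p23:
  fixes scale :: "'l::{division_ring,linordered_ring_strict} \<Rightarrow> 'm::linordered_ab_group_add \<Rightarrow> 'm"
    and r :: nat and d :: "nat \<Rightarrow> nat" and E :: "'m list list set"
  assumes "ordered_vector_space scale"
    and "semilinear_prod scale r d E"
  shows "\<exists>\<alpha>::real. \<alpha> > 0 \<and>
           ((\<nexists>B. is_grid_factors r d B \<and> (\<forall>i<r. infinite (B i)) \<and> grid r B \<subseteq> E) \<longrightarrow>
            (\<forall>B. is_grid_factors r d B \<and> (\<forall>i<r. finite (B i)) \<longrightarrow>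
                 real (card (E \<inter> grid r B)) \<le> \<alpha> * delta r B))"
proof -
  interpret ovs scale
    by (rule ovs.intro) (rule assms(1))
  have E: "E \<subseteq> {xs. shaped r d xs}"
    using assms(2) by (simp add: semilinear_prod_def)
  obtain Fs where inv: "sign_invariant r (\<lambda>i. {..<d i}) (set Fs) (point_fun r d ` E)"
    using sign_invariant_semilinear_prod[OF assms(2)] by blast
  obtain \<alpha> where "0 < \<alpha>" and bound: "zarankiewicz_bound r (\<lambda>i. {..<d i}) (map fst Fs) \<alpha>"
    using zarankiewicz_bound_exists[of r "\<lambda>i. {..<d i}" "map fst Fs"] by blast
  show ?thesis
  proof (intro exI[of _ \<alpha>] conjI impI allI)
    fix B :: "nat \<Rightarrow> 'm list set"
    assume "\<nexists>B. is_grid_factors r d B \<and> (\<forall>i<r. infinite (B i)) \<and> grid r B \<subseteq> E"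
      and "is_grid_factors r d B \<and> (\<forall>i<r. finite (B i))"
    then show "real (card (E \<inter> grid r B)) \<le> \<alpha> * delta r B"
      using card_list_grid_le[OF bound E inv] by blast
  qed (rule \<open>0 < \<alpha>\<close>)
qed

end
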